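(* Let $m,n\ge0$ with $m+n\ge 3$, and assume $\operatorname{char}K\ne2$ if $m+n=4$ and $\operatorname{char}K\ne3$ if $m+n=3$. Then the kernel of the universal central extension $\psi:\mathfrak{stl}(m,n,\mathcal A)\to\mathfrak{sl}(m,n,\mathcal A)$ in the category of Leibniz superalgebras is isomorphic (as a $K$-vector space) to $HH_1(\mathcal A)=\operatorname{Ker}d_1/\operatorname{Im}d_2$, where $d_1:\mathcal A\otimes\mathcal A\to\mathcal A$, $d_1(a_0\otimes a_1)=a_0a_1-a_1a_0$, and $d_2:\mathcal A^{\otimes3}\to\mathcal A\otimes\mathcal A$, $d_2(a_0\otimes a_1\otimes a_2)=a_0a_1\otimes a_2-a_0\otimes a_1a_2-a_1\otimes a_2a_0$.
   Context: Standing assumptions: $K$ is a field (the paper assumes throughout $\operatorname{char}K\ne 2,3$), and $\mathcal A$ is an associative unital $K$-algebra; tensor products over $K$. A Leibniz superalgebra is a $\mathbb Z_2$-graded $K$-space with a bilinear bracket respecting the grading and satisfying $[[a,b],c]=[a,[b,c]]-(-1)^{|a||b|}[b,[a,c]]$ for homogeneous elements. For $1\le i,j\le m+n$ put $\tau_{ij}=0$ if $i,j\le m$ or $i,j\ge m+1$, and $\tau_{ij}=1$ otherwise. $\mathfrak{gl}(m,n,\mathcal A)$: $(m+n)\times(m+n)$ matrices over $\mathcal A$, matrix unit $E_{ij}(a)$ of degree $\tau_{ij}$, bracket $[X,Y]=XY-(-1)^{\alpha\beta}YX$. $\mathfrak{sl}(m,n,\mathcal A)$ is the subsuperalgebra generated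 by the $E_{ij}(a)$, $i\ne j$. $\mathfrak{stl}(m,n,\mathcal A)$ is the Leibniz superalgebra generated by $v_{ij}(a)$, $1\le i\ne j\le m+n$, $a\in\mathcal A$, of degree $\tau_{ij}$, subject to: (1) $K$-linearity in $a$; (2) $[v_{ij}(a),v_{kl}(b)]=0$ if $i\ne l$, $j\ne k$; (3) $[v_{ij}(a),v_{kl}(b)]=v_{il}(ab)$ if $i\ne l$, $j=k$; (4) $[v_{ij}(a),v_{kl}(b)]=-(-1)^{\tau_{ij}\tau_{kl}}v_{kj}(ba)$ if $i=l$, $j\ne k$. $\psi$ is the homomorphism with $\psi(v_{ij}(a))=E_{ij}(a)$. *)

theory Defs
  imports Complex_Main "HOL-Library.Poly_Mapping"
begin

definition K_algebra :: "('k::field \<Rightarrow> 'a::{ring,monoid_mult} \<Rightarrow> 'a) \<Rightarrow> bool" where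
  "K_algebra sc \<longleftrightarrow> module sc \<and>
     (\<forall>c x y. sc c (x * y) = sc c x * y \<and> sc c (x * y) = x * sc c y)"

definition smul :: "'k::field \<Rightarrow> ('b \<Rightarrow>\<^sub>0 'k) \<Rightarrow> ('b \<Rightarrow>\<^sub>0 'k)" where
  "smul c f = Poly_Mapping.map ((*) c) f"

definition gen :: "'b \<Rightarrow> ('b \<Rightarrow>\<^sub>0 'k::field)" where
  "gen b = Poly_Mapping.single b 1"

definition coset :: "'v::ab_group_add set \<Rightarrow> 'v \<Rightarrow> 'v set" where
  "coset U x = (\<lambda>u. x + u) ` U"

text \<open>V/U and W/U' (quotients realised as sets of cosets) are isomorphic as
  K-vector spaces: a bijection of the coset sets compatible with the induced
  addition and scalar multiplication.\<close>
definition quot_iso ::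
  "('k \<Rightarrow> 'v::ab_group_add \<Rightarrow> 'v) \<Rightarrow> 'v set \<Rightarrow> 'v set \<Rightarrow>
   ('k \<Rightarrow> 'w::ab_group_add \<Rightarrow> 'w) \<Rightarrow> 'w set \<Rightarrow> 'w set \<Rightarrow> bool" where
  "quot_iso sV V U sW W U' \<longleftrightarrow>
     (\<exists>\<phi>. bij_betw \<phi> (coset U ` V) (coset U' ` W) \<and>
       (\<forall>x\<in>V. \<forall>y\<in>V. \<forall>x'\<in>W. \<forall>y'\<in>W.
          \<phi> (coset U x) = coset U' x' \<longrightarrow> \<phi> (coset U y) = coset U' y' \<longrightarrow>
          \<phi> (coset U (x + y)) = coset U' (x' + y')) \<and>
       (\<forall>c. \<forall>x\<in>V. \<forall>x'\<in>W.
          \<phi> (coset U x) = coset U' x' \<longrightarrow> \<phi> (coset U (sV c x)) = coset U' (sW c x')))"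

definition idx :: "nat \<Rightarrow> nat \<Rightarrow> nat set" where
  "idx m n = {1..m+n}"

text \<open>tau m i j is True iff tau_ij = 1.\<close>
definition tau :: "nat \<Rightarrow> nat \<Rightarrow> nat \<Rightarrow> bool" where
  "tau m i j \<longleftrightarrow> ((i \<le> m) \<noteq> (j \<le> m))"

definition sgn_par :: "bool \<Rightarrow> bool \<Rightarrow> 'r::ring_1" where
  "sgn_par p q = (if p \<and> q then -1 else 1)"

datatype 'a tr = Gen nat nat 'a | Br "'a tr" "'a tr"

fun deg :: "nat \<Rightarrow> 'a tr \<Rightarrow> bool" where
  "deg m (Gen i j a) = tau m i j"
| "deg m (Br s t) = (deg m s \<noteq> deg m t)"

fun valid :: "nat \<Rightarrow> nat \<Rightarrow> 'a tr \<Rightarrow> bool" where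
  "valid m n (Gen i j a) \<longleftrightarrow> i \<in> idx m n \<and> j \<in> idx m n \<and> i \<noteq> j"
| "valid m n (Br s t) \<longleftrightarrow> valid m n s \<and> valid m n t"

text \<open>The free (non-associative) K-algebra on the homogeneous symbols v_ij(a).\<close>
definition FreeL :: "nat \<Rightarrow> nat \<Rightarrow> ('a tr \<Rightarrow>\<^sub>0 'k::field) set" where
  "FreeL m n = {f. \<forall>t\<in>Poly_Mapping.keys f. valid m n t}"

definition br :: "('a tr \<Rightarrow>\<^sub>0 'k::field) \<Rightarrow> ('a tr \<Rightarrow>\<^sub>0 'k) \<Rightarrow> ('a tr \<Rightarrow>\<^sub>0 'k)" where
  "br f g = (\<Sum>s\<in>Poly_Mapping.keys f. \<Sum>t\<in>Poly_Mapping.keys g. Poly_Mapping.single (Br s t) (Poly_Mapping.lookup f s * Poly_Mapping.lookup g t))"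

definition homog :: "nat \<Rightarrow> bool \<Rightarrow> ('a tr \<Rightarrow>\<^sub>0 'k::field) \<Rightarrow> bool" where
  "homog m p f \<longleftrightarrow> (\<forall>t\<in>Poly_Mapping.keys f. deg m t = p)"

definition v :: "nat \<Rightarrow> nat \<Rightarrow> 'a \<Rightarrow> ('a tr \<Rightarrow>\<^sub>0 'k::field)" where
  "v i j a = gen (Gen i j a)"

definition stl_rels ::
  "('k::field \<Rightarrow> 'a::{ring,monoid_mult} \<Rightarrow> 'a) \<Rightarrow> nat \<Rightarrow> nat \<Rightarrow> ('a tr \<Rightarrow>\<^sub>0 'k) set" where
  "stl_rels sc m n =
     \<comment> \<open>super Leibniz identity for homogeneous elements\<close>
     {br (br x y) z - br x (br y z) + smul (sgn_par p q) (br y (br x z))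
        | x y z p q r. x \<in> FreeL m n \<and> y \<in> FreeL m n \<and> z \<in> FreeL m n \<and>
            homog m p x \<and> homog m q y \<and> homog m r z}
   \<union> \<comment> \<open>(1) K-linearity in a\<close>
     {v i j (sc c a + b) - smul c (v i j a) - v i j b
        | i j c a b. i \<in> idx m n \<and> j \<in> idx m n \<and> i \<noteq> j}
   \<union> \<comment> \<open>(2)\<close>
     {br (v i j a) (v k l b)
        | i j k l a b. {i,j,k,l} \<subseteq> idx m n \<and> i \<noteq> j \<and> k \<noteq> l \<and> i \<noteq> l \<and> j \<noteq> k}
   \<union> \<comment> \<open>(3)\<close>
     {br (v i j a) (v j l b) - v i l (a * b)
        | i j l a b. {i,j,l} \<subseteq> idx m n \<and> i \<noteq> j \<and> j \<noteq> l \<and> i \<noteq> l}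
   \<union> \<comment> \<open>(4)\<close>
     {br (v i j a) (v k i b) + smul (sgn_par (tau m i j) (tau m k i)) (v k j (b * a))
        | i j k a b. {i,j,k} \<subseteq> idx m n \<and> i \<noteq> j \<and> k \<noteq> i \<and> j \<noteq> k}"

inductive_set alg_ideal :: "nat \<Rightarrow> nat \<Rightarrow> ('a tr \<Rightarrow>\<^sub>0 'k::field) set \<Rightarrow> ('a tr \<Rightarrow>\<^sub>0 'k) set"
  for m n R where
  rel: "r \<in> R \<Longrightarrow> r \<in> alg_ideal m n R"
| zero: "0 \<in> alg_ideal m n R"
| add: "x \<in> alg_ideal m n R \<Longrightarrow> y \<in> alg_ideal m n R \<Longrightarrow> x + y \<in> alg_ideal m n R"
| scal: "x \<in> alg_ideal m n R \<Longrightarrow> smul c x \<in> alg_ideal m n R"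
| left: "x \<in> alg_ideal m n R \<Longrightarrow> f \<in> FreeL m n \<Longrightarrow> br f x \<in> alg_ideal m n R"
| right: "x \<in> alg_ideal m n R \<Longrightarrow> f \<in> FreeL m n \<Longrightarrow> br x f \<in> alg_ideal m n R"

text \<open>stl(m,n,A) = FreeL m n / stl_ideal sc m n.\<close>
definition stl_ideal :: "('k::field \<Rightarrow> 'a::{ring,monoid_mult} \<Rightarrow> 'a) \<Rightarrow> nat \<Rightarrow> nat \<Rightarrow> ('a tr \<Rightarrow>\<^sub>0 'k) set" where
  "stl_ideal sc m n = alg_ideal m n (stl_rels sc m n)"

type_synonym 'a mat = "nat \<Rightarrow> nat \<Rightarrow> 'a"

definition Emat :: "nat \<Rightarrow> nat \<Rightarrow> 'a::{ring,monoid_mult} \<Rightarrow> 'a mat" where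
  "Emat i j a = (\<lambda>r s. if r = i \<and> s = j then a else 0)"

definition mmul :: "nat \<Rightarrow> nat \<Rightarrow> 'a::{ring,monoid_mult} mat \<Rightarrow> 'a mat \<Rightarrow> 'a mat" where
  "mmul m n X Y = (\<lambda>r s. \<Sum>k\<in>idx m n. X r k * Y k s)"

definition sbr :: "nat \<Rightarrow> nat \<Rightarrow> bool \<Rightarrow> bool \<Rightarrow> 'a::{ring,monoid_mult} mat \<Rightarrow> 'a mat \<Rightarrow> 'a mat" where
  "sbr m n p q X Y = (\<lambda>r s. mmul m n X Y r s - (if p \<and> q then - mmul m n Y X r s else mmul m n Y X r s))"

text \<open>psi on the free algebra: v_ij(a) goes to E_ij(a), brackets to super brackets.\<close>
fun mev :: "nat \<Rightarrow> nat \<Rightarrow> 'a::{ring,monoid_mult} tr \<Rightarrow> 'a mat" where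
  "mev m n (Gen i j a) = Emat i j a"
| "mev m n (Br s t) = sbr m n (deg m s) (deg m t) (mev m n s) (mev m n t)"

definition evalF :: "('k::field \<Rightarrow> 'a::{ring,monoid_mult} \<Rightarrow> 'a) \<Rightarrow> nat \<Rightarrow> nat \<Rightarrow> ('a tr \<Rightarrow>\<^sub>0 'k) \<Rightarrow> 'a mat" where
  "evalF sc m n f = (\<lambda>r s. \<Sum>t\<in>Poly_Mapping.keys f. sc (Poly_Mapping.lookup f t) (mev m n t r s))"

text \<open>Representatives of Ker psi: elements of the free algebra mapped to 0.\<close>
definition ker_psi :: "('k::field \<Rightarrow> 'a::{ring,monoid_mult} \<Rightarrow> 'a) \<Rightarrow> nat \<Rightarrow> nat \<Rightarrow> ('a tr \<Rightarrow>\<^sub>0 'k) set" where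
  "ker_psi sc m n = {f \<in> FreeL m n. evalF sc m n f = (\<lambda>r s. 0)}"

text \<open>A \<otimes> A = free space on A \<times> A modulo the bilinearity relations.\<close>
definition bilin_rels :: "('k::field \<Rightarrow> 'a::{ring,monoid_mult} \<Rightarrow> 'a) \<Rightarrow> ('a \<times> 'a \<Rightarrow>\<^sub>0 'k) set" where
  "bilin_rels sc =
     {gen (a + a', b) - gen (a, b) - gen (a', b) | a a' b. True}
   \<union> {gen (a, b + b') - gen (a, b) - gen (a, b') | a b b'. True}
   \<union> {gen (sc c a, b) - smul c (gen (a, b)) | c a b. True}
   \<union> {gen (a, sc c b) - smul c (gen (a, b)) | c a b. True}"

definition tensor_null :: "('k::field \<Rightarrow> 'a::{ring,monoid_mult} \<Rightarrow> 'a) \<Rightarrow> ('a \<times> 'a \<Rightarrow>\<^sub>0 'k) set" where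
  "tensor_null sc = module.span smul (bilin_rels sc)"

text \<open>Lifts of d_1 and d_2 to the free spaces.\<close>
definition d1 :: "('k::field \<Rightarrow> 'a::{ring,monoid_mult} \<Rightarrow> 'a) \<Rightarrow> ('a \<times> 'a \<Rightarrow>\<^sub>0 'k) \<Rightarrow> 'a" where
  "d1 sc f = (\<Sum>p\<in>Poly_Mapping.keys f. sc (Poly_Mapping.lookup f p) (fst p * snd p - snd p * fst p))"

definition d2 :: "('a::{ring,monoid_mult} \<times> 'a \<times> 'a \<Rightarrow>\<^sub>0 'k::field) \<Rightarrow> ('a \<times> 'a \<Rightarrow>\<^sub>0 'k)" where
  "d2 g = (\<Sum>q\<in>Poly_Mapping.keys g. case q of (a0, a1, a2) \<Rightarrow>
      smul (Poly_Mapping.lookup g q) (gen (a0 * a1, a2) - gen (a0, a1 * a2) - gen (a1, a2 * a0)))"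

text \<open>Preimage in the free space of Ker d_1 \<subseteq> A \<otimes> A.\<close>
definition HH1_cycles :: "('k::field \<Rightarrow> 'a::{ring,monoid_mult} \<Rightarrow> 'a) \<Rightarrow> ('a \<times> 'a \<Rightarrow>\<^sub>0 'k) set" where
  "HH1_cycles sc = {f. d1 sc f = 0}"

text \<open>Preimage in the free space of Im d_2 \<subseteq> A \<otimes> A.\<close>
definition HH1_bounds :: "('k::field \<Rightarrow> 'a::{ring,monoid_mult} \<Rightarrow> 'a) \<Rightarrow> ('a \<times> 'a \<Rightarrow>\<^sub>0 'k) set" where
  "HH1_bounds sc = {d2 g + b | g b. b \<in> tensor_null sc}"

end

theory Submission
  imports Defs
begin

text \<open>
  Write \<open>\<psi>\<close> for the evaluation of the free algebra FL on the symbols \<open>v\<^sub>i\<^sub>j(a)\<close> in the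
  matrix superalgebra, and let \<open>\<Omega>\<close> send a generator to 0 and a bracket of two trees \<open>s, t\<close>
  to the cocycle \<open>\<omega>(\<psi> s, \<psi> t) = \<Sum>\<^sub>r\<^sub>,\<^sub>s (-1)\<^bsup>|r|\<^esup> (\<psi> s)\<^sub>r\<^sub>s \<otimes> (\<psi> t)\<^sub>s\<^sub>r\<close>.
  Then \<open>\<Omega>\<close> is linear, \<open>d\<^sub>1 \<circ> \<Omega>\<close> is the supertrace of \<open>\<psi>\<close> (so \<open>\<Omega>\<close> maps Ker \<open>\<psi>\<close> to cycles),
  and \<open>\<Omega>\<close> maps the defining ideal I of stl to boundaries: on the super Leibniz identity
  \<open>\<omega>\<close> is a Hochschild boundary \<open>d\<^sub>2\<close> term by term, and on the relations (1)--(4) it is a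
  degenerate tensor.

  In the other direction \<open>u \<mapsto> \<Sum> h\<^sub>1\<^sub>2(a,b) - h\<^sub>1\<^sub>2(1,ab)\<close> over the terms \<open>a \<otimes> b\<close> of \<open>u\<close>,
  with \<open>h\<^sub>i\<^sub>j(a,b) = (-1)\<^bsup>|i|\<^esup>[v\<^sub>i\<^sub>j(a), v\<^sub>j\<^sub>i(b)]\<close>, is inverse to \<open>\<Omega>\<close> up to boundaries, kills
  boundaries modulo I, and maps cycles into Ker \<open>\<psi>\<close>. This rests on the identity
  \<open>h\<^sub>i\<^sub>j(ab,c) = h\<^sub>i\<^sub>k(a,bc) + h\<^sub>k\<^sub>j(b,ca)\<close> modulo I for distinct \<open>i, j, k\<close>.
  Modulo I every element of FL is a combination of the \<open>v\<^sub>i\<^sub>j(a)\<close>, of the \<open>h\<^sub>1\<^sub>k(1,b)\<close> and of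
  such a lift; if it lies in Ker \<open>\<psi>\<close> the first two parts vanish, and if moreover its
  \<open>\<Omega>\<close>-image is a boundary then so is the lifted cycle, and the element lies in I.
\<close>

lemma lookup_smul [simp]: "Poly_Mapping.lookup (smul c f) x = c * Poly_Mapping.lookup f x"
  unfolding smul_def by transfer (auto simp: when_def)

interpretation free: vector_space "smul :: 'k::field \<Rightarrow> ('b \<Rightarrow>\<^sub>0 'k) \<Rightarrow> _"
  by unfold_locales (auto intro!: poly_mapping_eqI simp: lookup_add algebra_simps)

lemma smul_single [simp]: "smul c (Poly_Mapping.single x d) = Poly_Mapping.single x (c * d)"
  by (rule poly_mapping_eqI) (simp add: lookup_single when_def)

lemma keys_smul: "Poly_Mapping.keys (smul c f) \<subseteq> Poly_Mapping.keys f"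
  by (auto simp: in_keys_iff)

lemma keys_gen [simp]: "Poly_Mapping.keys (gen t :: _ \<Rightarrow>\<^sub>0 'k::field) = {t}"
  by (simp add: gen_def)

lemma keys_sum_subset: "Poly_Mapping.keys (sum F A) \<subseteq> (\<Union>x\<in>A. Poly_Mapping.keys (F x))"
proof (induct A rule: infinite_finite_induct)
  case (insert x F) then show ?case using keys_add by fastforce
qed auto

definition lin_ext :: "('k::zero \<Rightarrow> 'v \<Rightarrow> 'v) \<Rightarrow> ('b \<Rightarrow> 'v) \<Rightarrow> ('b \<Rightarrow>\<^sub>0 'k) \<Rightarrow> 'v::comm_monoid_add" where
  "lin_ext s \<phi> f = (\<Sum>p\<in>Poly_Mapping.keys f. s (Poly_Mapping.lookup f p) (\<phi> p))"

context vector_space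
begin

lemma lin_ext_superset:
  assumes "finite S" "Poly_Mapping.keys f \<subseteq> S"
  shows "lin_ext scale \<phi> f = (\<Sum>p\<in>S. scale (Poly_Mapping.lookup f p) (\<phi> p))"
  unfolding lin_ext_def
  by (rule sum.mono_neutral_left) (use assms in \<open>auto simp: in_keys_iff\<close>)

lemma lin_ext_add: "lin_ext scale \<phi> (f + g) = lin_ext scale \<phi> f + lin_ext scale \<phi> g"
proof -
  let ?S = "Poly_Mapping.keys f \<union> Poly_Mapping.keys g"
  have "lin_ext scale \<phi> (f + g) = (\<Sum>p\<in>?S. scale (Poly_Mapping.lookup (f + g) p) (\<phi> p))"
    by (rule lin_ext_superset) (auto dest: keys_add[THEN subsetD])
  also have "\<dots> = (\<Sum>p\<in>?S. scale (Poly_Mapping.lookup f p) (\<phi> p))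
                  + (\<Sum>p\<in>?S. scale (Poly_Mapping.lookup g p) (\<phi> p))"
    by (simp add: lookup_add scale_left_distrib sum.distrib)
  also have "\<dots> = lin_ext scale \<phi> f + lin_ext scale \<phi> g"
    by (simp add: lin_ext_superset[of ?S f] lin_ext_superset[of ?S g])
  finally show ?thesis .
qed

lemma lin_ext_zero [simp]: "lin_ext scale \<phi> 0 = 0"
  by (simp add: lin_ext_def)

lemma lin_ext_single [simp]: "lin_ext scale \<phi> (Poly_Mapping.single b c) = scale c (\<phi> b)"
  by (subst lin_ext_superset[of "{b}"]) auto

lemma lin_ext_gen [simp]: "lin_ext scale \<phi> (gen b) = \<phi> b"
  by (simp add: gen_def)

lemma lin_ext_smul: "lin_ext scale \<phi> (smul c f) = scale c (lin_ext scale \<phi> f)"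
proof -
  have "lin_ext scale \<phi> (smul c f)
      = (\<Sum>p\<in>Poly_Mapping.keys f. scale (Poly_Mapping.lookup (smul c f) p) (\<phi> p))"
    by (rule lin_ext_superset) (auto simp: in_keys_iff)
  then show ?thesis
    by (simp add: lin_ext_def scale_sum_right)
qed

lemma lin_ext_uminus: "lin_ext scale \<phi> (- f) = - lin_ext scale \<phi> f"
  using lin_ext_add[of \<phi> "- f" f] by (simp add: eq_neg_iff_add_eq_0)

lemma lin_ext_diff: "lin_ext scale \<phi> (f - g) = lin_ext scale \<phi> f - lin_ext scale \<phi> g"
  using lin_ext_add[of \<phi> f "- g"] by (simp add: lin_ext_uminus)

lemma lin_ext_sum: "lin_ext scale \<phi> (sum F A) = (\<Sum>x\<in>A. lin_ext scale \<phi> (F x))"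
  by (induct A rule: infinite_finite_induct) (simp_all add: lin_ext_add)

lemma lin_ext_fun_diff:
  "lin_ext scale (\<lambda>p. \<phi> p - \<chi> p) f = lin_ext scale \<phi> f - lin_ext scale \<chi> f"
  by (simp add: lin_ext_def scale_right_diff_distrib sum_subtractf)

lemma lin_ext_fun_add:
  "lin_ext scale (\<lambda>p. \<phi> p + \<chi> p) f = lin_ext scale \<phi> f + lin_ext scale \<chi> f"
  by (simp add: lin_ext_def scale_right_distrib sum.distrib)

end

lemma lin_ext_hom:
  fixes \<Psi> :: "'v::comm_monoid_add \<Rightarrow> 'w::ab_group_add"
  assumes add: "\<And>x y. \<Psi> (x + y) = \<Psi> x + \<Psi> y"
    and scale: "\<And>c x. \<Psi> (s1 c x) = s2 c (\<Psi> x)"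
  shows "\<Psi> (lin_ext s1 \<phi> f) = lin_ext s2 (\<lambda>p. \<Psi> (\<phi> p)) (f :: 'b \<Rightarrow>\<^sub>0 'k::zero)"
proof -
  have "\<Psi> 0 = 0"
    using add[of 0 0] by simp
  then show ?thesis
    unfolding lin_ext_def
    by (subst sum_comp_morphism[symmetric, of \<Psi>]) (auto simp: add scale o_def)
qed

lemma lin_ext_cong_keys: "(\<And>p. p \<in> Poly_Mapping.keys f \<Longrightarrow> \<phi> p = \<psi> p) \<Longrightarrow> lin_ext s \<phi> f = lin_ext s \<psi> f"
  by (simp add: lin_ext_def)

lemma lin_ext_gen_id: "lin_ext smul gen u = (u :: 'b \<Rightarrow>\<^sub>0 'k::field)"
proof (rule poly_mapping_eqI)
  fix x
  have "Poly_Mapping.lookup (lin_ext smul gen u) x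
      = (\<Sum>p\<in>Poly_Mapping.keys u. if p = x then Poly_Mapping.lookup u p else 0)"
    unfolding lin_ext_def lookup_sum by (rule sum.cong) (auto simp: gen_def lookup_single when_def)
  then show "Poly_Mapping.lookup (lin_ext smul gen u) x = Poly_Mapping.lookup u x"
    by (simp add: sum.delta' in_keys_iff)
qed

lemma keys_lin_ext_subset:
  "Poly_Mapping.keys (lin_ext smul \<phi> f) \<subseteq> (\<Union>p\<in>Poly_Mapping.keys f. Poly_Mapping.keys (\<phi> p))"
  unfolding lin_ext_def using keys_sum_subset keys_smul by fastforce

lemma (in module) coset_eq_iff:
  assumes U: "subspace U"
  shows "coset U x = coset U y \<longleftrightarrow> x - y \<in> U"
proof
  assume "coset U x = coset U y"
  moreover have "x \<in> coset U x"
    unfolding coset_def using subspace_0[OF U] by (metis add.right_neutral imageI)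
  ultimately obtain w where "w \<in> U" "x = y + w"
    unfolding coset_def by auto
  then show "x - y \<in> U" by simp
next
  assume d: "x - y \<in> U"
  have "x + w = y + ((x - y) + w)" "y + w = x + (- (x - y) + w)" for w
    by simp_all
  with d show "coset U x = coset U y"
    unfolding coset_def using subspace_add[OF U] subspace_neg[OF U] by blast
qed

lemma induced_coset_map:
  assumes "module sW" and U': "module.subspace sW U'"
    and diff: "\<And>x y. \<Phi> (x - y) = \<Phi> x - \<Phi> y"
    and cosU: "\<And>x y. coset U x = coset U y \<Longrightarrow> \<Phi> (x - y) \<in> U'"
  shows "\<exists>\<phi>. \<forall>f\<in>V. \<phi> (coset U f) = coset U' (\<Phi> f)"
proof
  interpret W: module sW by fact
  show "\<forall>f\<in>V. (\<lambda>X. coset U' (\<Phi> (SOME f. f \<in> V \<and> X = coset U f))) (coset U f) = coset U' (\<Phi> f)"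
  proof
    fix f assume f: "f \<in> V"
    let ?g = "SOME g. g \<in> V \<and> coset U f = coset U g"
    have "?g \<in> V \<and> coset U f = coset U ?g"
      by (rule someI_ex) (use f in blast)
    then have "\<Phi> (f - ?g) \<in> U'"
      by (intro cosU) simp
    then have "\<Phi> f - \<Phi> ?g \<in> U'"
      by (simp add: diff)
    then have "- (\<Phi> f - \<Phi> ?g) \<in> U'"
      by (rule W.subspace_neg[OF U'])
    then have "\<Phi> ?g - \<Phi> f \<in> U'"
      by simp
    then show "(\<lambda>X. coset U' (\<Phi> (SOME f. f \<in> V \<and> X = coset U f))) (coset U f) = coset U' (\<Phi> f)"
      using W.coset_eq_iff[OF U'] by simp
  qed
qed

lemma induced_coset_map_bij:
  assumes "module sV" "module sW"
    and V: "module.subspace sV V" and U: "module.subspace sV U" and U': "module.subspace sW U'"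
    and diff: "\<And>x y. \<Phi> (x - y) = \<Phi> x - \<Phi> y"
    and \<phi>: "\<And>f. f \<in> V \<Longrightarrow> \<phi> (coset U f) = coset U' (\<Phi> f)"
    and maps_to: "\<And>x. x \<in> V \<Longrightarrow> \<Phi> x \<in> W"
    and reflects_U: "\<And>x. x \<in> V \<Longrightarrow> \<Phi> x \<in> U' \<Longrightarrow> x \<in> U"
    and onto: "\<And>w. w \<in> W \<Longrightarrow> \<exists>x\<in>V. \<Phi> x - w \<in> U'"
  shows "bij_betw \<phi> (coset U ` V) (coset U' ` W)"
proof (rule bij_betw_imageI)
  interpret V: module sV by fact
  interpret W: module sW by fact
  show "inj_on \<phi> (coset U ` V)"
  proof (rule inj_onI)
    fix X Y assume "X \<in> coset U ` V" "Y \<in> coset U ` V" "\<phi> X = \<phi> Y"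
    then obtain f g where "f \<in> V" "g \<in> V" "X = coset U f" "Y = coset U g" "\<Phi> (f - g) \<in> U'"
      using \<phi> W.coset_eq_iff[OF U'] diff by auto
    then show "X = Y"
      using reflects_U V.subspace_diff[OF V] V.coset_eq_iff[OF U] by blast
  qed
  show "\<phi> ` coset U ` V = coset U' ` W"
  proof
    show "\<phi> ` coset U ` V \<subseteq> coset U' ` W"
      using \<phi> maps_to by auto
    show "coset U' ` W \<subseteq> \<phi> ` coset U ` V"
    proof
      fix Z assume "Z \<in> coset U' ` W"
      then obtain w where "w \<in> W" "Z = coset U' w"
        by blast
      moreover obtain x where "x \<in> V" "\<Phi> x - w \<in> U'"
        using onto[OF \<open>w \<in> W\<close>] by blast
      ultimately show "Z \<in> \<phi> ` coset U ` V"
        using \<phi> W.coset_eq_iff[OF U'] by (metis imageI)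
    qed
  qed
qed

lemma quot_iso_by_linear_map:
  assumes "module sV" "module sW"
    and V: "module.subspace sV V" and U: "module.subspace sV U" and U': "module.subspace sW U'"
    and add: "\<And>x y. \<Phi> (x + y) = \<Phi> x + \<Phi> y"
    and scale: "\<And>c x. \<Phi> (sV c x) = sW c (\<Phi> x)"
    and maps_to: "\<And>x. x \<in> V \<Longrightarrow> \<Phi> x \<in> W"
    and maps_U: "\<And>x. x \<in> U \<Longrightarrow> \<Phi> x \<in> U'"
    and reflects_U: "\<And>x. x \<in> V \<Longrightarrow> \<Phi> x \<in> U' \<Longrightarrow> x \<in> U"
    and onto: "\<And>w. w \<in> W \<Longrightarrow> \<exists>x\<in>V. \<Phi> x - w \<in> U'"
  shows "quot_iso sV V U sW W U'"
proof -
  interpret V: module sV by fact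
  interpret W: module sW by fact
  have diff: "\<Phi> (x - y) = \<Phi> x - \<Phi> y" for x y
    by (metis add diff_add_cancel eq_diff_eq)
  have cosU: "\<Phi> (x - y) \<in> U'" if "coset U x = coset U y" for x y
    using that V.coset_eq_iff[OF U] maps_U by blast
  obtain \<phi> where "\<forall>f\<in>V. \<phi> (coset U f) = coset U' (\<Phi> f)"
    using induced_coset_map[OF \<open>module sW\<close> U' diff cosU] by blast
  then have \<phi>: "\<And>f. f \<in> V \<Longrightarrow> \<phi> (coset U f) = coset U' (\<Phi> f)"
    by blast
  have \<phi>_eq: "\<phi> (coset U x) = coset U' x' \<longleftrightarrow> \<Phi> x - x' \<in> U'" if "x \<in> V" for x x'
    using \<phi>[OF that] W.coset_eq_iff[OF U'] by simp
  show ?thesis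
    unfolding quot_iso_def
  proof (intro exI conjI ballI allI impI)
    show "bij_betw \<phi> (coset U ` V) (coset U' ` W)"
      by (rule induced_coset_map_bij[OF assms(1-5) diff \<phi> maps_to reflects_U onto])
  next
    fix x y x' y'
    assume "x \<in> V" "y \<in> V" "\<phi> (coset U x) = coset U' x'" "\<phi> (coset U y) = coset U' y'"
    then have "(\<Phi> x - x') + (\<Phi> y - y') \<in> U'"
      using \<phi>_eq W.subspace_add[OF U'] by blast
    then show "\<phi> (coset U (x + y)) = coset U' (x' + y')"
      using \<phi>_eq V.subspace_add[OF V \<open>x \<in> V\<close> \<open>y \<in> V\<close>] by (simp add: add algebra_simps)
  next
    fix c x x'
    assume "x \<in> V" "\<phi> (coset U x) = coset U' x'"
    then have "sW c (\<Phi> x - x') \<in> U'"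
      using \<phi>_eq W.subspace_scale[OF U'] by blast
    then show "\<phi> (coset U (sV c x)) = coset U' (sW c x')"
      using \<phi>_eq V.subspace_scale[OF V \<open>x \<in> V\<close>] by (simp add: scale W.scale_right_diff_distrib)
  qed
qed

definition neg_if :: "bool \<Rightarrow> 'r::ab_group_add \<Rightarrow> 'r" where
  "neg_if b x = (if b then - x else x)"

lemma neg_if_simps [simp]: "neg_if False x = x" "neg_if True x = - x" "neg_if b 0 = 0"
  by (auto simp: neg_if_def)

lemma neg_if_sum: "neg_if b (sum F A) = (\<Sum>x\<in>A. neg_if b (F x))"
  by (auto simp: neg_if_def sum_negf)

lemma neg_if_mult_left: "neg_if b (x * y) = neg_if b x * (y::'r::ring)"
  by (auto simp: neg_if_def)

lemma neg_if_mult_right: "neg_if b (x * y) = x * neg_if b (y::'r::ring)"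
  by (auto simp: neg_if_def)

lemma neg_if_diff: "neg_if b (x - y) = neg_if b x - neg_if b (y::'r::ab_group_add)"
  by (auto simp: neg_if_def)

lemma neg_if_add: "neg_if b (x + y) = neg_if b x + neg_if b (y::'r::ab_group_add)"
  by (auto simp: neg_if_def)

lemma neg_if_neg_if: "neg_if b (neg_if c x) = neg_if (b \<noteq> c) (x::'r::ab_group_add)"
  by (auto simp: neg_if_def)

lemma sum3_swap_inner:
  "(\<Sum>r\<in>A. \<Sum>s\<in>A. \<Sum>k\<in>A. f r s k) = (\<Sum>r\<in>A. \<Sum>s\<in>A. \<Sum>k\<in>A. f r k s)"
  by (rule sum.cong[OF refl], rule sum.swap)

lemma sum3_swap_outer:
  "(\<Sum>r\<in>A. \<Sum>s\<in>A. \<Sum>k\<in>A. f r s k) = (\<Sum>r\<in>A. \<Sum>s\<in>A. \<Sum>k\<in>A. f k s r)"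
proof -
  have "(\<Sum>r\<in>A. \<Sum>s\<in>A. \<Sum>k\<in>A. f r s k) = (\<Sum>r\<in>A. \<Sum>k\<in>A. \<Sum>s\<in>A. f r s k)"
    by (rule sum3_swap_inner)
  also have "\<dots> = (\<Sum>k\<in>A. \<Sum>r\<in>A. \<Sum>s\<in>A. f r s k)"
    by (rule sum.swap)
  also have "\<dots> = (\<Sum>k\<in>A. \<Sum>s\<in>A. \<Sum>r\<in>A. f r s k)"
    by (rule sum3_swap_inner)
  finally show ?thesis .
qed

lemma br_lin_ext: "br f g = lin_ext smul (\<lambda>s. lin_ext smul (\<lambda>t. gen (Br s t)) g) f"
  unfolding br_def lin_ext_def free.scale_sum_right
  by (simp add: gen_def)

lemma br_add_left: "br (f + g) h = br f h + br g h"
  by (simp add: br_lin_ext free.lin_ext_add)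

lemma br_add_right: "br f (g + h) = br f g + br f h"
  by (simp add: br_lin_ext free.lin_ext_add free.lin_ext_fun_add)

lemma br_smul_left: "br (smul c f) h = smul c (br f h)"
  by (simp add: br_lin_ext free.lin_ext_smul)

lemma br_smul_right: "br f (smul c h) = smul c (br f h)"
proof -
  have "br f (smul c h) = lin_ext smul (\<lambda>s. smul c (lin_ext smul (\<lambda>t. gen (Br s t)) h)) f"
    by (simp add: br_lin_ext free.lin_ext_smul)
  also have "\<dots> = smul c (br f h)"
    unfolding br_lin_ext
    by (rule lin_ext_hom[symmetric]) (auto simp: free.scale_right_distrib mult.commute)
  finally show ?thesis .
qed

lemma br_zero_left [simp]: "br 0 h = 0"
  by (simp add: br_def)

lemma br_zero_right [simp]: "br h 0 = 0"
  by (simp add: br_def)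

lemma br_neg_left: "br (- f) h = - br f h"
  using br_add_left[of "- f" f h] by (simp add: eq_neg_iff_add_eq_0)

lemma br_neg_right: "br h (- f) = - br h f"
  using br_add_right[of h "- f" f] by (simp add: eq_neg_iff_add_eq_0)

lemma br_diff_left: "br (f - g) h = br f h - br g h"
  using br_add_left[of f "- g" h] by (simp add: br_neg_left)

lemma br_diff_right: "br h (f - g) = br h f - br h g"
  using br_add_right[of h f "- g"] by (simp add: br_neg_right)

lemma br_gen [simp]: "br (gen s) (gen t) = gen (Br s t)"
  by (simp add: br_lin_ext)

lemma keys_br:
  fixes f g :: "'a tr \<Rightarrow>\<^sub>0 'k::field"
  shows "Poly_Mapping.keys (br f g)
           \<subseteq> {Br s t | s t. s \<in> Poly_Mapping.keys f \<and> t \<in> Poly_Mapping.keys g}"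
proof
  fix x assume "x \<in> Poly_Mapping.keys (br f g)"
  then have "x \<in> (\<Union>s\<in>Poly_Mapping.keys f. Poly_Mapping.keys (lin_ext smul (\<lambda>t. gen (Br s t)) g))"
    unfolding br_lin_ext by (rule keys_lin_ext_subset[THEN subsetD])
  then obtain s where s: "s \<in> Poly_Mapping.keys f"
    and "x \<in> Poly_Mapping.keys (lin_ext smul (\<lambda>t. gen (Br s t)) g)"
    by blast
  then have "x \<in> (\<Union>t\<in>Poly_Mapping.keys g. Poly_Mapping.keys (gen (Br s t) :: _ \<Rightarrow>\<^sub>0 'k))"
    by (intro keys_lin_ext_subset[THEN subsetD])
  then obtain t where "t \<in> Poly_Mapping.keys g" "x = Br s t"
    by auto
  with s show "x \<in> {Br s t | s t. s \<in> Poly_Mapping.keys f \<and> t \<in> Poly_Mapping.keys g}"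
    by blast
qed

lemma FL_zero [simp]: "0 \<in> FreeL m n"
  by (simp add: FreeL_def)

lemma FL_add: "f \<in> FreeL m n \<Longrightarrow> g \<in> FreeL m n \<Longrightarrow> f + g \<in> FreeL m n"
  unfolding FreeL_def using keys_add[of f g] by auto

lemma FL_smul: "f \<in> FreeL m n \<Longrightarrow> smul c f \<in> FreeL m n"
  unfolding FreeL_def using keys_smul[of c f] by auto

lemma FL_neg: "f \<in> FreeL m n \<Longrightarrow> - f \<in> FreeL m n"
  unfolding FreeL_def by simp

lemma FL_diff: "f \<in> FreeL m n \<Longrightarrow> g \<in> FreeL m n \<Longrightarrow> f - g \<in> FreeL m n"
  using FL_add[of f m n "- g"] FL_neg[of g m n] by simp

lemma FL_sum: "(\<And>x. x \<in> A \<Longrightarrow> F x \<in> FreeL m n) \<Longrightarrow> sum F A \<in> FreeL m n"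
  by (induct A rule: infinite_finite_induct) (auto intro: FL_add)

lemma FL_lin_ext: "(\<And>p. \<phi> p \<in> FreeL m n) \<Longrightarrow> lin_ext smul \<phi> u \<in> FreeL m n"
  unfolding lin_ext_def by (intro FL_sum FL_smul) auto

lemma FL_br: "f \<in> FreeL m n \<Longrightarrow> g \<in> FreeL m n \<Longrightarrow> br f g \<in> FreeL m n"
  unfolding FreeL_def using keys_br[of f g] by auto

lemma FL_gen: "valid m n t \<Longrightarrow> gen t \<in> FreeL m n"
  by (simp add: FreeL_def)

lemma homog_br: "homog m p f \<Longrightarrow> homog m q g \<Longrightarrow> homog m (p \<noteq> q) (br f g)"
  unfolding homog_def using keys_br[of f g] by auto

lemma homog_v: "homog m (tau m i j) (v i j a)"
  by (simp add: homog_def v_def)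

lemma tau_split: "tau m r s = (tau m r k \<noteq> tau m k s)"
  by (auto simp: tau_def)

lemma tau_sym: "tau m r s = tau m s r"
  by (auto simp: tau_def)

lemma tau_refl [simp]: "tau m r r = False"
  by (auto simp: tau_def)

lemma tau_conj_sym [simp]: "(tau m a b \<and> tau m b a) = tau m a b"
  by (auto simp: tau_def)

locale stl_algebra =
  fixes sc :: "'k::field \<Rightarrow> 'a::{ring,monoid_mult} \<Rightarrow> 'a" and m n :: nat
  assumes K_alg: "K_algebra sc" and three_le: "3 \<le> m + n"
begin

sublocale alg: vector_space sc
  using K_alg by (simp add: K_algebra_def module_iff_vector_space)

lemma sc_mult_left: "sc c (x * y) = sc c x * y"
  using K_alg unfolding K_algebra_def by blast

lemma sc_mult_right: "sc c (x * y) = x * sc c y"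
  using K_alg unfolding K_algebra_def by blast

abbreviation I where "I \<equiv> stl_ideal sc m n"

abbreviation FL :: "('a tr \<Rightarrow>\<^sub>0 'k) set" where "FL \<equiv> FreeL m n"

abbreviation J where "J \<equiv> idx m n"

lemma finite_idx [simp]: "finite J"
  by (simp add: idx_def)

lemma idx1: "1 \<in> J" and idx2: "2 \<in> J" and idx3: "3 \<in> J"
  using three_le by (simp_all add: idx_def)

lemma exists_third_idx: "i \<in> J \<Longrightarrow> j \<in> J \<Longrightarrow> \<exists>k\<in>J. k \<noteq> i \<and> k \<noteq> j"
proof -
  have "\<exists>k\<in>{1, 2, 3::nat}. k \<noteq> i \<and> k \<noteq> j" by auto
  then show "\<exists>k\<in>J. k \<noteq> i \<and> k \<noteq> j" using idx1 idx2 idx3 by blast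
qed

definition offdiag :: "nat \<Rightarrow> nat \<Rightarrow> bool" where
  "offdiag i j \<longleftrightarrow> i \<in> J \<and> j \<in> J \<and> i \<noteq> j"

lemma offdiag_sym: "offdiag i j \<Longrightarrow> offdiag j i"
  by (auto simp: offdiag_def)

lemma offdiag_small [simp]:
  "offdiag 1 2" "offdiag 2 1" "offdiag 1 3" "offdiag 3 1" "offdiag 2 3" "offdiag 3 2"
  "offdiag (Suc 0) 2" "offdiag 2 (Suc 0)" "offdiag (Suc 0) 3" "offdiag 3 (Suc 0)"
  using idx1 idx2 idx3 by (auto simp: offdiag_def)

lemma v_FL: "offdiag i j \<Longrightarrow> v i j a \<in> FL"
  by (simp add: offdiag_def v_def FL_gen)

lemma subspace_I: "free.subspace I"
  by (simp add: free.subspace_def stl_ideal_def alg_ideal.zero alg_ideal.add alg_ideal.scal)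

lemma I_zero [simp]: "0 \<in> I"
  by (rule free.subspace_0[OF subspace_I])

lemma I_add: "x \<in> I \<Longrightarrow> y \<in> I \<Longrightarrow> x + y \<in> I"
  by (rule free.subspace_add[OF subspace_I])

lemma I_smul: "x \<in> I \<Longrightarrow> smul c x \<in> I"
  by (rule free.subspace_scale[OF subspace_I])

lemma I_neg: "x \<in> I \<Longrightarrow> - x \<in> I"
  by (rule free.subspace_neg[OF subspace_I])

lemma I_diff: "x \<in> I \<Longrightarrow> y \<in> I \<Longrightarrow> x - y \<in> I"
  by (rule free.subspace_diff[OF subspace_I])

lemma I_sum: "(\<And>x. x \<in> A \<Longrightarrow> F x \<in> I) \<Longrightarrow> sum F A \<in> I"
  by (rule free.subspace_sum[OF subspace_I])

lemma I_rel: "x \<in> stl_rels sc m n \<Longrightarrow> x \<in> I"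
  by (simp add: stl_ideal_def alg_ideal.rel)

definition modI :: "('a tr \<Rightarrow>\<^sub>0 'k) \<Rightarrow> ('a tr \<Rightarrow>\<^sub>0 'k) \<Rightarrow> bool" (infix "\<approx>" 50) where
  "x \<approx> y \<longleftrightarrow> x - y \<in> I"

lemma modI_refl [simp]: "x \<approx> x"
  by (simp add: modI_def free.subspace_0[OF subspace_I])

lemma modI_sym: "x \<approx> y \<Longrightarrow> y \<approx> x"
  unfolding modI_def using I_neg[of "x - y"] by simp

lemma modI_trans [trans]: "x \<approx> y \<Longrightarrow> y \<approx> z \<Longrightarrow> x \<approx> z"
  unfolding modI_def using I_add[of "x - y" "y - z"] by simp

lemma modI_add: "x \<approx> x' \<Longrightarrow> y \<approx> y' \<Longrightarrow> x + y \<approx> x' + y'"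
  unfolding modI_def using I_add[of "x - x'" "y - y'"] by (simp add: add_diff_add)

lemma modI_diff: "x \<approx> x' \<Longrightarrow> y \<approx> y' \<Longrightarrow> x - y \<approx> x' - y'"
  unfolding modI_def using I_diff[of "x - x'" "y - y'"] by (simp add: diff_diff_eq2 algebra_simps)

lemma modI_smul: "x \<approx> x' \<Longrightarrow> smul c x \<approx> smul c x'"
  unfolding modI_def using I_smul[of "x - x'" c] by (simp add: free.scale_right_diff_distrib)

lemma modI_br_left: "x \<approx> x' \<Longrightarrow> f \<in> FL \<Longrightarrow> br x f \<approx> br x' f"
  unfolding modI_def stl_ideal_def using alg_ideal.right[of "x - x'"] by (simp add: br_diff_left)

lemma modI_br_right: "x \<approx> x' \<Longrightarrow> f \<in> FL \<Longrightarrow> br f x \<approx> br f x'"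
  unfolding modI_def stl_ideal_def using alg_ideal.left[of "x - x'"] by (simp add: br_diff_right)

lemma modI_sum: "(\<And>x. x \<in> A \<Longrightarrow> F x \<approx> G x) \<Longrightarrow> sum F A \<approx> sum G A"
  by (induct A rule: infinite_finite_induct) (auto intro: modI_add)

lemma modI_solve: "x \<approx> y + z \<Longrightarrow> z \<approx> x - y"
  unfolding modI_def using I_neg[of "x - (y + z)"] by (simp add: algebra_simps)

lemma stl_rels_leibniz:
  "x \<in> FL \<Longrightarrow> y \<in> FL \<Longrightarrow> z \<in> FL \<Longrightarrow> homog m p x \<Longrightarrow> homog m q y \<Longrightarrow> homog m r z \<Longrightarrow>
   br (br x y) z - br x (br y z) + smul (sgn_par p q) (br y (br x z)) \<in> stl_rels sc m n"
  unfolding stl_rels_def by (rule UnI1, rule UnI1, rule UnI1, rule UnI1) blast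

lemma stl_rels_linear: "i \<in> J \<Longrightarrow> j \<in> J \<Longrightarrow> i \<noteq> j \<Longrightarrow>
  v i j (sc c a + b) - smul c (v i j a) - v i j b \<in> stl_rels sc m n"
  unfolding stl_rels_def by (rule UnI1, rule UnI1, rule UnI1, rule UnI2) blast

lemma stl_rels2: "{i,j,k,l} \<subseteq> J \<Longrightarrow> i \<noteq> j \<Longrightarrow> k \<noteq> l \<Longrightarrow> i \<noteq> l \<Longrightarrow> j \<noteq> k \<Longrightarrow>
  br (v i j a) (v k l b) \<in> stl_rels sc m n"
  unfolding stl_rels_def by (rule UnI1, rule UnI1, rule UnI2) blast

lemma stl_rels3: "{i,j,l} \<subseteq> J \<Longrightarrow> i \<noteq> j \<Longrightarrow> j \<noteq> l \<Longrightarrow> i \<noteq> l \<Longrightarrow>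
  br (v i j a) (v j l b) - v i l (a * b) \<in> stl_rels sc m n"
  unfolding stl_rels_def by (rule UnI1, rule UnI2) blast

lemma stl_rels4: "{i,j,k} \<subseteq> J \<Longrightarrow> i \<noteq> j \<Longrightarrow> k \<noteq> i \<Longrightarrow> j \<noteq> k \<Longrightarrow>
  br (v i j a) (v k i b) + smul (sgn_par (tau m i j) (tau m k i)) (v k j (b * a)) \<in> stl_rels sc m n"
  unfolding stl_rels_def by (rule UnI2) blast

lemma leibniz_right:
  assumes "x \<in> FL" "y \<in> FL" "z \<in> FL" "homog m p x" "homog m q y" "homog m r z"
  shows "br x (br y z) \<approx> br (br x y) z + smul (sgn_par p q) (br y (br x z))"
proof -
  have "br (br x y) z - br x (br y z) + smul (sgn_par p q) (br y (br x z)) \<in> I"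
    by (rule I_rel, rule stl_rels_leibniz[OF assms])
  from I_neg[OF this] show ?thesis
    by (simp add: modI_def algebra_simps)
qed

lemma leibniz_left:
  assumes "x \<in> FL" "y \<in> FL" "z \<in> FL" "homog m p x" "homog m q y" "homog m r z"
  shows "br (br x y) z \<approx> br x (br y z) - smul (sgn_par p q) (br y (br x z))"
proof -
  have "br (br x y) z - br x (br y z) + smul (sgn_par p q) (br y (br x z)) \<in> I"
    by (rule I_rel, rule stl_rels_leibniz[OF assms])
  then show ?thesis
    by (simp add: modI_def algebra_simps)
qed

lemma v_linear: "offdiag i j \<Longrightarrow> v i j (sc c a + b) \<approx> smul c (v i j a) + v i j b"
proof -
  assume "offdiag i j"
  then have "v i j (sc c a + b) - smul c (v i j a) - v i j b \<in> I"
    by (intro I_rel stl_rels_linear) (auto simp: offdiag_def)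
  then show ?thesis by (simp add: modI_def algebra_simps)
qed

lemma v_add: "offdiag i j \<Longrightarrow> v i j (a + b) \<approx> v i j a + v i j b"
  using v_linear[of i j 1 a b] by simp

lemma v_zero: "offdiag i j \<Longrightarrow> v i j 0 \<approx> 0"
  using v_add[of i j 0 0] I_neg[of "- v i j 0"] by (simp add: modI_def)

lemma v_sc: "offdiag i j \<Longrightarrow> v i j (sc c a) \<approx> smul c (v i j a)"
  using v_linear[of i j c a 0] v_zero[of i j] by (metis add.right_neutral modI_add modI_refl modI_trans)

lemma rel2_modI:
  "offdiag i j \<Longrightarrow> offdiag k l \<Longrightarrow> i \<noteq> l \<Longrightarrow> j \<noteq> k \<Longrightarrow> br (v i j a) (v k l b) \<approx> 0"
  unfolding modI_def by (simp, intro I_rel stl_rels2) (auto simp: offdiag_def)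

lemma rel3_modI:
  "offdiag i j \<Longrightarrow> offdiag j l \<Longrightarrow> i \<noteq> l \<Longrightarrow> br (v i j a) (v j l b) \<approx> v i l (a * b)"
  unfolding modI_def by (intro I_rel stl_rels3) (auto simp: offdiag_def)

lemma rel4_modI:
  "offdiag i j \<Longrightarrow> offdiag k i \<Longrightarrow> j \<noteq> k \<Longrightarrow>
   br (v i j a) (v k i b) \<approx> - smul (sgn_par (tau m i j) (tau m k i)) (v k j (b * a))"
  unfolding modI_def by (simp, intro I_rel stl_rels4) (auto simp: offdiag_def)

section \<open>The matrix superalgebra\<close>

lemma neg_if_sc: "neg_if b (sc c x) = sc c (neg_if b x)"
  by (auto simp: neg_if_def)

text \<open>Unlike \<^const>\<open>sbr\<close>, this bracket needs no degrees: the sign \<open>(-1)\<^bsup>|X||Y|\<^esup>\<close> is taken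
  entrywise as \<open>(-1)\<^bsup>\<tau>\<^sub>r\<^sub>k \<tau>\<^sub>k\<^sub>s\<^esup>\<close>, which is the same thing on homogeneous matrices.\<close>

definition sbracket :: "'a mat \<Rightarrow> 'a mat \<Rightarrow> 'a mat" where
  "sbracket X Y = (\<lambda>r s. (\<Sum>k\<in>J. X r k * Y k s) - (\<Sum>k\<in>J. neg_if (tau m r k \<and> tau m k s) (Y r k * X k s)))"

definition homog_mat :: "bool \<Rightarrow> 'a mat \<Rightarrow> bool" where
  "homog_mat p X \<longleftrightarrow> (\<forall>r s. X r s \<noteq> 0 \<longrightarrow> tau m r s = p)"

lemma sbr_eq_sbracket:
  assumes "homog_mat p X" "homog_mat q Y"
  shows "sbr m n p q X Y = sbracket X Y"
proof (intro ext)
  fix r s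
  have "(if p \<and> q then - mmul m n Y X r s else mmul m n Y X r s)
      = (\<Sum>k\<in>J. neg_if (p \<and> q) (Y r k * X k s))"
    by (cases p; cases q) (simp_all add: mmul_def sum_negf neg_if_def)
  also have "\<dots> = (\<Sum>k\<in>J. neg_if (tau m r k \<and> tau m k s) (Y r k * X k s))"
  proof (rule sum.cong)
    fix k
    show "neg_if (p \<and> q) (Y r k * X k s) = neg_if (tau m r k \<and> tau m k s) (Y r k * X k s)"
    proof (cases "Y r k * X k s = 0")
      case False
      then have "Y r k \<noteq> 0" "X k s \<noteq> 0" by auto
      with assms have "tau m r k = q" "tau m k s = p" by (auto simp: homog_mat_def)
      then show ?thesis by (auto simp: neg_if_def)
    qed simp
  qed simp
  finally show "sbr m n p q X Y r s = sbracket X Y r s"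
    by (simp add: sbr_def sbracket_def mmul_def)
qed

lemma homog_mat_sbracket:
  assumes "homog_mat p X" "homog_mat q Y"
  shows "homog_mat (p \<noteq> q) (sbracket X Y)"
  unfolding homog_mat_def
proof (intro allI impI)
  fix r s assume nz: "sbracket X Y r s \<noteq> 0"
  show "tau m r s = (p \<noteq> q)"
  proof (rule ccontr)
    assume ne: "tau m r s \<noteq> (p \<noteq> q)"
    have "X r k * Y k s = 0" for k
    proof (rule ccontr)
      assume "X r k * Y k s \<noteq> 0"
      then have "X r k \<noteq> 0" "Y k s \<noteq> 0" by auto
      with assms have "tau m r k = p" "tau m k s = q" by (auto simp: homog_mat_def)
      with ne tau_split[of m r s k] show False by simp
    qed
    moreover have "Y r k * X k s = 0" for k
    proof (rule ccontr)
      assume "Y r k * X k s \<noteq> 0"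
      then have "Y r k \<noteq> 0" "X k s \<noteq> 0" by auto
      with assms have "tau m r k = q" "tau m k s = p" by (auto simp: homog_mat_def)
      with ne tau_split[of m r s k] show False by auto
    qed
    ultimately have "sbracket X Y r s = 0" by (simp add: sbracket_def)
    with nz show False by simp
  qed
qed

lemma homog_mat_Emat: "homog_mat (tau m i j) (Emat i j a)"
  by (simp add: homog_mat_def Emat_def)

lemma homog_mat_mev: "homog_mat (deg m t) (mev m n t)"
proof (induct t)
  case (Gen i j a) then show ?case by (simp add: homog_mat_Emat)
next
  case (Br s t)
  have "homog_mat (deg m s \<noteq> deg m t) (sbracket (mev m n s) (mev m n t))"
    by (rule homog_mat_sbracket) (fact Br)+
  then show ?case by (simp only: mev.simps deg.simps sbr_eq_sbracket[OF Br(1) Br(2)])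
qed

lemma mev_Br: "mev m n (Br s t) = sbracket (mev m n s) (mev m n t)"
  by (simp add: sbr_eq_sbracket homog_mat_mev)

lemma sbracket_lincomb_left:
  assumes "\<And>r s. X r s = (\<Sum>p\<in>P. sc (c p) (Xp p r s))"
  shows "sbracket X Y r s = (\<Sum>p\<in>P. sc (c p) (sbracket (Xp p) Y r s))"
proof -
  have A: "(\<Sum>k\<in>J. X r k * Y k s) = (\<Sum>p\<in>P. sc (c p) (\<Sum>k\<in>J. Xp p r k * Y k s))"
    unfolding assms
    by (simp add: sum_distrib_right sc_mult_left[symmetric] alg.scale_sum_right sum.swap[of _ P])
  have B: "(\<Sum>k\<in>J. neg_if (tau m r k \<and> tau m k s) (Y r k * X k s))
      = (\<Sum>p\<in>P. sc (c p) (\<Sum>k\<in>J. neg_if (tau m r k \<and> tau m k s) (Y r k * Xp p k s)))"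
    unfolding assms
    by (simp add: sum_distrib_left sc_mult_right[symmetric] alg.scale_sum_right neg_if_sum neg_if_sc sum.swap[of _ P])
  show ?thesis
    unfolding sbracket_def A B by (simp add: alg.scale_right_diff_distrib sum_subtractf)
qed

lemma sbracket_lincomb_right:
  assumes "\<And>r s. Y r s = (\<Sum>p\<in>P. sc (c p) (Yp p r s))"
  shows "sbracket X Y r s = (\<Sum>p\<in>P. sc (c p) (sbracket X (Yp p) r s))"
proof -
  have A: "(\<Sum>k\<in>J. X r k * Y k s) = (\<Sum>p\<in>P. sc (c p) (\<Sum>k\<in>J. X r k * Yp p k s))"
    unfolding assms
    by (simp add: sum_distrib_left sc_mult_right[symmetric] alg.scale_sum_right sum.swap[of _ P])
  have B: "(\<Sum>k\<in>J. neg_if (tau m r k \<and> tau m k s) (Y r k * X k s))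
      = (\<Sum>p\<in>P. sc (c p) (\<Sum>k\<in>J. neg_if (tau m r k \<and> tau m k s) (Yp p r k * X k s)))"
    unfolding assms
    by (simp add: sum_distrib_right sc_mult_left[symmetric] alg.scale_sum_right neg_if_sum neg_if_sc sum.swap[of _ P])
  show ?thesis
    unfolding sbracket_def A B by (simp add: alg.scale_right_diff_distrib sum_subtractf)
qed

abbreviation psi where "psi \<equiv> evalF sc m n"

lemma psi_lin_ext: "psi f r s = lin_ext sc (\<lambda>t. mev m n t r s) f"
  by (simp add: evalF_def lin_ext_def)

lemma psi_add: "psi (f + g) r s = psi f r s + psi g r s"
  by (simp add: psi_lin_ext alg.lin_ext_add)

lemma psi_smul: "psi (smul c f) r s = sc c (psi f r s)"
  by (simp add: psi_lin_ext alg.lin_ext_smul)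

lemma psi_zero [simp]: "psi 0 r s = 0"
  by (simp add: psi_lin_ext)

lemma psi_diff: "psi (f - g) r s = psi f r s - psi g r s"
  by (simp add: psi_lin_ext alg.lin_ext_diff)

lemma psi_sum: "psi (sum F A) r s = (\<Sum>x\<in>A. psi (F x) r s)"
  by (simp add: psi_lin_ext alg.lin_ext_sum)

lemma psi_gen [simp]: "psi (gen t) r s = mev m n t r s"
  by (simp add: psi_lin_ext alg.lin_ext_gen)

lemma psi_v_entry [simp]: "psi (v i j a) r s = Emat i j a r s"
  by (simp add: v_def)

lemma psi_br_entry: "psi (br f g) r s = sbracket (psi f) (psi g) r s"
proof -
  have h: "psi (lin_ext smul \<phi> h) r s = lin_ext sc (\<lambda>p. psi (\<phi> p) r s) h" for \<phi> and h :: "'x \<Rightarrow>\<^sub>0 'k"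
    by (rule lin_ext_hom) (simp_all add: psi_add psi_smul)
  have "psi (br f g) r s = lin_ext sc (\<lambda>s'. lin_ext sc (\<lambda>t'. mev m n (Br s' t') r s) g) f"
    unfolding br_lin_ext h by simp
  also have "\<dots> = lin_ext sc (\<lambda>s'. sbracket (mev m n s') (psi g) r s) f"
    unfolding mev_Br
    by (rule arg_cong[where f = "\<lambda>F. lin_ext sc F f"], rule ext, subst sbracket_lincomb_right[of "psi g"])
       (auto simp: evalF_def lin_ext_def)
  also have "\<dots> = sbracket (psi f) (psi g) r s"
    by (subst sbracket_lincomb_left[of "psi f"]) (auto simp: evalF_def lin_ext_def)
  finally show ?thesis .
qed

lemma homog_mat_psi: "homog m p f \<Longrightarrow> homog_mat p (psi f)"
  unfolding homog_mat_def homog_def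
proof (intro allI impI)
  fix r s assume h: "\<forall>t\<in>Poly_Mapping.keys f. deg m t = p" and nz: "psi f r s \<noteq> 0"
  then obtain t where "t \<in> Poly_Mapping.keys f" "sc (Poly_Mapping.lookup f t) (mev m n t r s) \<noteq> 0"
    unfolding evalF_def by (meson sum.neutral)
  moreover from this(2) have "mev m n t r s \<noteq> 0" by (metis alg.scale_zero_right)
  ultimately show "tau m r s = p" using h homog_mat_mev[of t] by (auto simp: homog_mat_def)
qed

abbreviation tau2 where "tau2 a b c \<equiv> tau m a b \<and> tau m b c"

lemma sbracket_sbracket_left:
  "sbracket (sbracket U V) W r s = (\<Sum>a\<in>J. \<Sum>b\<in>J.
      U r a * V a b * W b s - neg_if (tau2 r a b) (V r a * U a b * W b s)
    - neg_if (tau2 r a s) (W r a * U a b * V b s) + neg_if (tau2 r a s) (neg_if (tau2 a b s) (W r a * V a b * U b s)))"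
proof -
  have "(\<Sum>k\<in>J. sbracket U V r k * W k s) = (\<Sum>b\<in>J. \<Sum>a\<in>J.
      U r a * V a b * W b s - neg_if (tau2 r a b) (V r a * U a b * W b s))"
    unfolding sbracket_def
    by (simp add: left_diff_distrib sum_distrib_right sum_subtractf neg_if_mult_left[symmetric])
  also have "\<dots> = (\<Sum>a\<in>J. \<Sum>b\<in>J.
      U r a * V a b * W b s - neg_if (tau2 r a b) (V r a * U a b * W b s))"
    by (rule sum.swap)
  finally have A: "(\<Sum>k\<in>J. sbracket U V r k * W k s) = (\<Sum>a\<in>J. \<Sum>b\<in>J.
      U r a * V a b * W b s - neg_if (tau2 r a b) (V r a * U a b * W b s))" .
  have B: "(\<Sum>k\<in>J. neg_if (tau2 r k s) (W r k * sbracket U V k s)) = (\<Sum>a\<in>J. \<Sum>b\<in>J.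
      neg_if (tau2 r a s) (W r a * U a b * V b s) - neg_if (tau2 r a s) (neg_if (tau2 a b s) (W r a * V a b * U b s)))"
    unfolding sbracket_def
    by (simp add: right_diff_distrib sum_distrib_left sum_subtractf neg_if_mult_right[symmetric]
        neg_if_sum neg_if_diff mult.assoc)
  show ?thesis
  proof -
    have "sbracket (sbracket U V) W r s = (\<Sum>k\<in>J. sbracket U V r k * W k s) - (\<Sum>k\<in>J. neg_if (tau2 r k s) (W r k * sbracket U V k s))"
      by (simp only: sbracket_def[of "sbracket U V" W])
    then show ?thesis unfolding A B by (simp add: sum_subtractf sum.distrib algebra_simps)
  qed
qed

lemma sbracket_sbracket_right:
  "sbracket U (sbracket V W) r s = (\<Sum>a\<in>J. \<Sum>b\<in>J.
      U r a * V a b * W b s - neg_if (tau2 a b s) (U r a * W a b * V b s)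
    - neg_if (tau2 r b s) (V r a * W a b * U b s) + neg_if (tau2 r b s) (neg_if (tau2 r a b) (W r a * V a b * U b s)))"
proof -
  have A: "(\<Sum>k\<in>J. U r k * sbracket V W k s) = (\<Sum>a\<in>J. \<Sum>b\<in>J.
      U r a * V a b * W b s - neg_if (tau2 a b s) (U r a * W a b * V b s))"
    unfolding sbracket_def
    by (simp add: right_diff_distrib sum_distrib_left sum_subtractf neg_if_mult_right[symmetric]
        neg_if_sum mult.assoc)
  have "(\<Sum>k\<in>J. neg_if (tau2 r k s) (sbracket V W r k * U k s)) = (\<Sum>b\<in>J. \<Sum>a\<in>J.
      neg_if (tau2 r b s) (V r a * W a b * U b s) - neg_if (tau2 r b s) (neg_if (tau2 r a b) (W r a * V a b * U b s)))"
    unfolding sbracket_def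
    by (simp add: left_diff_distrib sum_distrib_right sum_subtractf neg_if_mult_left[symmetric]
        neg_if_sum neg_if_diff)
  also have "\<dots> = (\<Sum>a\<in>J. \<Sum>b\<in>J.
      neg_if (tau2 r b s) (V r a * W a b * U b s) - neg_if (tau2 r b s) (neg_if (tau2 r a b) (W r a * V a b * U b s)))"
    by (rule sum.swap)
  finally have B: "(\<Sum>k\<in>J. neg_if (tau2 r k s) (sbracket V W r k * U k s)) = (\<Sum>a\<in>J. \<Sum>b\<in>J.
      neg_if (tau2 r b s) (V r a * W a b * U b s) - neg_if (tau2 r b s) (neg_if (tau2 r a b) (W r a * V a b * U b s)))" .
  show ?thesis
  proof -
    have "sbracket U (sbracket V W) r s = (\<Sum>k\<in>J. U r k * sbracket V W k s) - (\<Sum>k\<in>J. neg_if (tau2 r k s) (sbracket V W r k * U k s))"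
      by (simp only: sbracket_def[of U "sbracket V W"])
    then show ?thesis unfolding A B by (simp add: sum_subtractf sum.distrib algebra_simps)
  qed
qed

lemma neg_if_cancel: "(M \<noteq> 0 \<Longrightarrow> b1 = b2) \<Longrightarrow> neg_if b1 M - neg_if b2 M = (0::'a)"
  by (cases "M = 0") auto

lemma neg_if_triple_cancel:
  assumes "homog_mat p1 U" "homog_mat p2 V" "homog_mat p3 W"
    and "tau m r a = p1 \<Longrightarrow> tau m a b = p2 \<Longrightarrow> tau m b s = p3 \<Longrightarrow> b1 = b2"
  shows "neg_if b1 (U r a * V a b * W b s) - neg_if b2 (U r a * V a b * W b s) = 0"
proof (rule neg_if_cancel)
  assume "U r a * V a b * W b s \<noteq> 0"
  then have "U r a \<noteq> 0" "V a b \<noteq> 0" "W b s \<noteq> 0"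
    by auto
  with assms show "b1 = b2"
    by (auto simp: homog_mat_def)
qed

lemma sbracket_leibniz:
  assumes hX: "homog_mat p X" and hY: "homog_mat q Y" and hZ: "homog_mat z Z"
  shows "sbracket (sbracket X Y) Z r s - sbracket X (sbracket Y Z) r s + neg_if (p \<and> q) (sbracket Y (sbracket X Z) r s) = 0"
proof -
  define e where "e = (p \<and> q)"
  define G where "G a b =
      (neg_if e (Y r a * X a b * Z b s) - neg_if (tau2 r a b) (Y r a * X a b * Z b s))
    + (neg_if e (neg_if (tau2 r b s) (neg_if (tau2 r a b) (Z r a * X a b * Y b s))) - neg_if (tau2 r a s) (Z r a * X a b * Y b s))
    + (neg_if (tau2 r a s) (neg_if (tau2 a b s) (Z r a * Y a b * X b s)) - neg_if (tau2 r b s) (neg_if (tau2 r a b) (Z r a * Y a b * X b s)))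
    + (neg_if (tau2 a b s) (X r a * Z a b * Y b s) - neg_if e (neg_if (tau2 r b s) (X r a * Z a b * Y b s)))
    + (neg_if (tau2 r b s) (Y r a * Z a b * X b s) - neg_if e (neg_if (tau2 a b s) (Y r a * Z a b * X b s)))" for a b
  have "G a b = 0" for a b
  proof -
    have "neg_if e (Y r a * X a b * Z b s) - neg_if (tau2 r a b) (Y r a * X a b * Z b s) = 0"
      "neg_if (e \<noteq> (tau2 r b s \<noteq> tau2 r a b)) (Z r a * X a b * Y b s)
        - neg_if (tau2 r a s) (Z r a * X a b * Y b s) = 0"
      "neg_if (tau2 r a s \<noteq> tau2 a b s) (Z r a * Y a b * X b s)
        - neg_if (tau2 r b s \<noteq> tau2 r a b) (Z r a * Y a b * X b s) = 0"
      "neg_if (tau2 a b s) (X r a * Z a b * Y b s) - neg_if (e \<noteq> tau2 r b s) (X r a * Z a b * Y b s) = 0"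
      "neg_if (tau2 r b s) (Y r a * Z a b * X b s) - neg_if (e \<noteq> tau2 a b s) (Y r a * Z a b * X b s) = 0"
      by (rule neg_if_triple_cancel[OF hY hX hZ] neg_if_triple_cancel[OF hZ hX hY]
          neg_if_triple_cancel[OF hZ hY hX] neg_if_triple_cancel[OF hX hZ hY]
          neg_if_triple_cancel[OF hY hZ hX]; auto simp: e_def tau_def)+
    then show ?thesis
      unfolding G_def neg_if_neg_if by simp
  qed
  have "sbracket (sbracket X Y) Z r s - sbracket X (sbracket Y Z) r s + neg_if e (sbracket Y (sbracket X Z) r s) = (\<Sum>a\<in>J. \<Sum>b\<in>J. G a b)"
    unfolding sbracket_sbracket_left sbracket_sbracket_right G_def
    by (simp add: neg_if_sum neg_if_diff neg_if_add sum_subtractf sum.distrib algebra_simps)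
  then show ?thesis using \<open>\<And>a b. G a b = 0\<close> by (simp add: e_def)
qed

section \<open>The tensor square and the cocycle \<open>\<Omega>\<close>\<close>

abbreviation N :: "('a \<times> 'a \<Rightarrow>\<^sub>0 'k) set" where "N \<equiv> tensor_null sc"

abbreviation Bd :: "('a \<times> 'a \<Rightarrow>\<^sub>0 'k) set" where "Bd \<equiv> HH1_bounds sc"

lemma subspace_N: "free.subspace N"
  unfolding tensor_null_def by simp

definition modN :: "('a \<times> 'a \<Rightarrow>\<^sub>0 'k) \<Rightarrow> ('a \<times> 'a \<Rightarrow>\<^sub>0 'k) \<Rightarrow> bool" (infix "\<simeq>" 50) where
  "x \<simeq> y \<longleftrightarrow> x - y \<in> N"

lemma N_zero [simp]: "0 \<in> N" by (rule free.subspace_0[OF subspace_N])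

lemma N_add: "x \<in> N \<Longrightarrow> y \<in> N \<Longrightarrow> x + y \<in> N" by (rule free.subspace_add[OF subspace_N])

lemma N_diff: "x \<in> N \<Longrightarrow> y \<in> N \<Longrightarrow> x - y \<in> N" by (rule free.subspace_diff[OF subspace_N])

lemma N_neg: "x \<in> N \<Longrightarrow> - x \<in> N" by (rule free.subspace_neg[OF subspace_N])

lemma N_smul: "x \<in> N \<Longrightarrow> smul c x \<in> N" by (rule free.subspace_scale[OF subspace_N])

lemma N_sum: "(\<And>x. x \<in> A \<Longrightarrow> F x \<in> N) \<Longrightarrow> sum F A \<in> N" by (rule free.subspace_sum[OF subspace_N])

lemma modN_refl [simp]: "x \<simeq> x" by (simp add: modN_def)

lemma modN_sym: "x \<simeq> y \<Longrightarrow> y \<simeq> x"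
  unfolding modN_def using N_neg[of "x - y"] by simp

lemma modN_trans [trans]: "x \<simeq> y \<Longrightarrow> y \<simeq> z \<Longrightarrow> x \<simeq> z"
  unfolding modN_def using N_add[of "x - y" "y - z"] by simp

lemma modN_add: "x \<simeq> x' \<Longrightarrow> y \<simeq> y' \<Longrightarrow> x + y \<simeq> x' + y'"
  unfolding modN_def using N_add[of "x - x'" "y - y'"] by (simp add: add_diff_add)

lemma modN_diff: "x \<simeq> x' \<Longrightarrow> y \<simeq> y' \<Longrightarrow> x - y \<simeq> x' - y'"
  unfolding modN_def using N_diff[of "x - x'" "y - y'"] by (simp add: diff_diff_eq2 algebra_simps)

lemma modN_smul: "x \<simeq> x' \<Longrightarrow> smul c x \<simeq> smul c x'"
  unfolding modN_def using N_smul[of "x - x'" c] by (simp add: free.scale_right_diff_distrib)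

lemma modN_sum: "(\<And>x. x \<in> A \<Longrightarrow> F x \<simeq> G x) \<Longrightarrow> sum F A \<simeq> sum G A"
  by (induct A rule: infinite_finite_induct) (auto intro: modN_add)

lemma modN_N: "x \<in> N \<Longrightarrow> x \<simeq> 0" by (simp add: modN_def)

lemma bilin_rels_N: "x \<in> bilin_rels sc \<Longrightarrow> x \<in> N"
  unfolding tensor_null_def by (rule free.span_base)

lemma tensor_add_left: "gen (a + a', b) \<simeq> gen (a, b) + gen (a', b)"
proof -
  have "gen (a + a', b) - gen (a, b) - gen (a', b) \<in> N"
    by (rule bilin_rels_N) (unfold bilin_rels_def, blast)
  then show ?thesis by (simp add: modN_def diff_diff_eq)
qed

lemma tensor_add_right: "gen (a, b + b') \<simeq> gen (a, b) + gen (a, b')"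
proof -
  have "gen (a, b + b') - gen (a, b) - gen (a, b') \<in> N"
    by (rule bilin_rels_N) (unfold bilin_rels_def, blast)
  then show ?thesis by (simp add: modN_def diff_diff_eq)
qed

lemma tensor_scale_left: "gen (sc c a, b) \<simeq> smul c (gen (a, b))"
proof -
  have "gen (sc c a, b) - smul c (gen (a, b)) \<in> N"
    by (rule bilin_rels_N) (unfold bilin_rels_def, blast)
  then show ?thesis by (simp add: modN_def)
qed

lemma tensor_scale_right: "gen (a, sc c b) \<simeq> smul c (gen (a, b))"
proof -
  have "gen (a, sc c b) - smul c (gen (a, b)) \<in> N"
    by (rule bilin_rels_N) (unfold bilin_rels_def, blast)
  then show ?thesis by (simp add: modN_def)
qed

lemma tensor_zero_left: "gen (0, b) \<simeq> 0"
  using tensor_add_left[of 0 0 b] N_neg[of "- gen (0, b)"] by (simp add: modN_def)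

lemma tensor_zero_right: "gen (a, 0) \<simeq> 0"
  using tensor_add_right[of a 0 0] N_neg[of "- gen (a, 0)"] by (simp add: modN_def)

lemma tensor_neg_left: "gen (- a, b) \<simeq> - gen (a, b)"
  using tensor_scale_left[of "-1" a b] by simp

lemma tensor_neg_right: "gen (a, - b) \<simeq> - gen (a, b)"
  using tensor_scale_right[of a "-1" b] by simp

lemma tensor_diff_left: "gen (a - a', b) \<simeq> gen (a, b) - gen (a', b)"
  using tensor_add_left[of a "-a'" b] modN_add[OF modN_refl tensor_neg_left[of a' b], of "gen (a, b)"]
  by (simp add: modN_trans)

lemma tensor_diff_right: "gen (a, b - b') \<simeq> gen (a, b) - gen (a, b')"
  using tensor_add_right[of a b "-b'"] modN_add[OF modN_refl tensor_neg_right[of a b'], of "gen (a, b)"]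
  by (simp add: modN_trans)

lemma tensor_neg_if_left: "gen (neg_if \<beta> a, b) \<simeq> neg_if \<beta> (gen (a, b))"
  by (cases \<beta>) (simp_all add: tensor_neg_left)

lemma tensor_neg_if_right: "gen (a, neg_if \<beta> b) \<simeq> neg_if \<beta> (gen (a, b))"
  by (cases \<beta>) (simp_all add: tensor_neg_right)

lemma tensor_sum_left: "gen (sum F A, b) \<simeq> (\<Sum>x\<in>A. gen (F x, b))"
proof (induct A rule: infinite_finite_induct)
  case (insert x F')
  then show ?case
    by (simp) (meson modN_add modN_refl modN_trans tensor_add_left)
qed (simp_all add: tensor_zero_left)

lemma tensor_sum_right: "gen (a, sum F A) \<simeq> (\<Sum>x\<in>A. gen (a, F x))"
proof (induct A rule: infinite_finite_induct)
  case (insert x F')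
  then show ?case
    by (simp) (meson modN_add modN_refl modN_trans tensor_add_right)
qed (simp_all add: tensor_zero_right)

lemma tensor_lincomb_left: "gen (\<Sum>p\<in>P. sc (c p) (F p), b) \<simeq> (\<Sum>p\<in>P. smul (c p) (gen (F p, b)))"
proof -
  have "gen (\<Sum>p\<in>P. sc (c p) (F p), b) \<simeq> (\<Sum>p\<in>P. gen (sc (c p) (F p), b))" by (rule tensor_sum_left)
  also have "\<dots> \<simeq> (\<Sum>p\<in>P. smul (c p) (gen (F p, b)))" by (rule modN_sum, rule tensor_scale_left)
  finally show ?thesis .
qed

lemma tensor_lincomb_right: "gen (a, \<Sum>p\<in>P. sc (c p) (F p)) \<simeq> (\<Sum>p\<in>P. smul (c p) (gen (a, F p)))"
proof -
  have "gen (a, \<Sum>p\<in>P. sc (c p) (F p)) \<simeq> (\<Sum>p\<in>P. gen (a, sc (c p) (F p)))" by (rule tensor_sum_right)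
  also have "\<dots> \<simeq> (\<Sum>p\<in>P. smul (c p) (gen (a, F p)))" by (rule modN_sum, rule tensor_scale_right)
  finally show ?thesis .
qed

definition idx_sign :: "nat \<Rightarrow> 'k" where "idx_sign i = (if i \<le> m then 1 else -1)"

definition omega :: "'a mat \<Rightarrow> 'a mat \<Rightarrow> ('a \<times> 'a \<Rightarrow>\<^sub>0 'k)" where
  "omega X Y = (\<Sum>r\<in>J. \<Sum>s\<in>J. smul (idx_sign r) (gen (X r s, Y s r)))"

lemma omega_lincomb_left:
  assumes "\<And>r s. X r s = (\<Sum>p\<in>P. sc (c p) (Xp p r s))"
  shows "omega X Y \<simeq> (\<Sum>p\<in>P. smul (c p) (omega (Xp p) Y))"
proof -
  have "omega X Y \<simeq> (\<Sum>r\<in>J. \<Sum>s\<in>J. smul (idx_sign r) (\<Sum>p\<in>P. smul (c p) (gen (Xp p r s, Y s r))))"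
    unfolding omega_def assms by (intro modN_sum modN_smul tensor_lincomb_left)
  also have "\<dots> = (\<Sum>p\<in>P. smul (c p) (omega (Xp p) Y))"
    unfolding omega_def free.scale_sum_right
    by (simp add: sum.swap[of _ P] free.scale_sum_right mult.commute)
  finally show ?thesis .
qed

lemma omega_lincomb_right:
  assumes "\<And>r s. Y r s = (\<Sum>p\<in>P. sc (c p) (Yp p r s))"
  shows "omega X Y \<simeq> (\<Sum>p\<in>P. smul (c p) (omega X (Yp p)))"
proof -
  have "omega X Y \<simeq> (\<Sum>r\<in>J. \<Sum>s\<in>J. smul (idx_sign r) (\<Sum>p\<in>P. smul (c p) (gen (X r s, Yp p s r))))"
    unfolding omega_def assms by (intro modN_sum modN_smul tensor_lincomb_right)
  also have "\<dots> = (\<Sum>p\<in>P. smul (c p) (omega X (Yp p)))"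
    unfolding omega_def free.scale_sum_right
    by (simp add: sum.swap[of _ P] free.scale_sum_right mult.commute)
  finally show ?thesis .
qed

definition Omega_tree :: "'a tr \<Rightarrow> ('a \<times> 'a \<Rightarrow>\<^sub>0 'k)" where
  "Omega_tree t = (case t of Gen i j a \<Rightarrow> 0 | Br s t \<Rightarrow> omega (mev m n s) (mev m n t))"

definition Omega :: "('a tr \<Rightarrow>\<^sub>0 'k) \<Rightarrow> ('a \<times> 'a \<Rightarrow>\<^sub>0 'k)" where
  "Omega f = lin_ext smul Omega_tree f"

lemma Omega_add: "Omega (f + g) = Omega f + Omega g" by (simp add: Omega_def free.lin_ext_add)

lemma Omega_smul: "Omega (smul c f) = smul c (Omega f)" by (simp add: Omega_def free.lin_ext_smul)

lemma Omega_diff: "Omega (f - g) = Omega f - Omega g" by (simp add: Omega_def free.lin_ext_diff)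

lemma Omega_zero [simp]: "Omega 0 = 0" by (simp add: Omega_def)

lemma Omega_gen: "Omega (gen t) = Omega_tree t" by (simp add: Omega_def)

lemma Omega_v [simp]: "Omega (v i j a) = 0" by (simp add: v_def Omega_gen Omega_tree_def)

lemma lin_ext_modN: "(\<And>p. \<phi> p \<simeq> \<psi> p) \<Longrightarrow> lin_ext smul \<phi> f \<simeq> lin_ext smul \<psi> f"
  unfolding lin_ext_def by (intro modN_sum modN_smul) auto

lemma Omega_br: "Omega (br f g) \<simeq> omega (psi f) (psi g)"
proof -
  have h: "Omega (lin_ext smul \<phi> h) = lin_ext smul (\<lambda>p. Omega (\<phi> p)) h" for \<phi> and h :: "'x \<Rightarrow>\<^sub>0 'k"
    by (rule lin_ext_hom) (simp_all add: Omega_add Omega_smul)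
  have "Omega (br f g) = lin_ext smul (\<lambda>s'. lin_ext smul (\<lambda>t'. omega (mev m n s') (mev m n t')) g) f"
    unfolding br_lin_ext h by (simp add: Omega_gen Omega_tree_def)
  also have "\<dots> \<simeq> lin_ext smul (\<lambda>s'. omega (mev m n s') (psi g)) f"
  proof (rule lin_ext_modN)
    fix s'
    have "omega (mev m n s') (psi g) \<simeq> lin_ext smul (\<lambda>t'. omega (mev m n s') (mev m n t')) g"
      unfolding lin_ext_def by (rule omega_lincomb_right) (simp add: evalF_def)
    then show "lin_ext smul (\<lambda>t'. omega (mev m n s') (mev m n t')) g \<simeq> omega (mev m n s') (psi g)"
      by (rule modN_sym)
  qed
  also have "lin_ext smul (\<lambda>s'. omega (mev m n s') (psi g)) f \<simeq> omega (psi f) (psi g)"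
    unfolding lin_ext_def by (rule modN_sym, rule omega_lincomb_left) (simp add: evalF_def)
  finally show ?thesis .
qed

definition d2_basis :: "'a \<times> 'a \<times> 'a \<Rightarrow> ('a \<times> 'a \<Rightarrow>\<^sub>0 'k)" where
  "d2_basis q = (case q of (a0, a1, a2) \<Rightarrow> gen (a0 * a1, a2) - gen (a0, a1 * a2) - gen (a1, a2 * a0))"

lemma d2_lin_ext: "d2 g = lin_ext smul d2_basis g"
  unfolding d2_def lin_ext_def d2_basis_def
  by (rule sum.cong) (auto split: prod.split)

lemma subspace_Bd: "free.subspace Bd"
  unfolding free.subspace_def HH1_bounds_def
proof (intro conjI ballI allI)
  have "(0::('a \<times> 'a \<Rightarrow>\<^sub>0 'k)) = d2 0 + 0"
    by (simp add: d2_lin_ext)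
  then show "0 \<in> {d2 g + b |g b. b \<in> N}"
    using N_zero by blast
next
  fix x y assume "x \<in> {d2 g + b |g b. b \<in> N}" "y \<in> {d2 g + b |g b. b \<in> N}"
  then obtain g b g' b' where "x = d2 g + b" "b \<in> N" "y = d2 g' + b'" "b' \<in> N"
    by auto
  then have "x + y = d2 (g + g') + (b + b')" "b + b' \<in> N"
    by (simp_all add: d2_lin_ext free.lin_ext_add N_add)
  then show "x + y \<in> {d2 g + b |g b. b \<in> N}"
    by blast
next
  fix c x assume "x \<in> {d2 g + b |g b. b \<in> N}"
  then obtain g b where "x = d2 g + b" "b \<in> N"
    by auto
  then have "smul c x = d2 (smul c g) + smul c b" "smul c b \<in> N"
    by (simp_all add: d2_lin_ext free.lin_ext_smul N_smul free.scale_right_distrib)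
  then show "smul c x \<in> {d2 g + b |g b. b \<in> N}"
    by blast
qed

lemma Bd_zero [simp]: "0 \<in> Bd" by (rule free.subspace_0[OF subspace_Bd])

lemma Bd_add: "x \<in> Bd \<Longrightarrow> y \<in> Bd \<Longrightarrow> x + y \<in> Bd" by (rule free.subspace_add[OF subspace_Bd])

lemma Bd_diff: "x \<in> Bd \<Longrightarrow> y \<in> Bd \<Longrightarrow> x - y \<in> Bd" by (rule free.subspace_diff[OF subspace_Bd])

lemma Bd_neg: "x \<in> Bd \<Longrightarrow> - x \<in> Bd" by (rule free.subspace_neg[OF subspace_Bd])

lemma Bd_smul: "x \<in> Bd \<Longrightarrow> smul c x \<in> Bd" by (rule free.subspace_scale[OF subspace_Bd])

lemma Bd_sum: "(\<And>x. x \<in> A \<Longrightarrow> F x \<in> Bd) \<Longrightarrow> sum F A \<in> Bd" by (rule free.subspace_sum[OF subspace_Bd])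

lemma N_Bd: "x \<in> N \<Longrightarrow> x \<in> Bd"
proof -
  assume "x \<in> N"
  moreover have "x = d2 0 + x" by (simp add: d2_lin_ext)
  ultimately show ?thesis unfolding HH1_bounds_def by blast
qed

lemma d2_basis_Bd: "gen (a0 * a1, a2) - gen (a0, a1 * a2) - gen (a1, a2 * a0) \<in> Bd"
proof -
  have "d2 (gen (a0, a1, a2)) = d2_basis (a0, a1, a2)"
    unfolding d2_lin_ext by simp
  then have "d2 (gen (a0, a1, a2)) + 0 = (gen (a0 * a1, a2) - gen (a0, a1 * a2) - gen (a1, a2 * a0) :: ('a \<times> 'a \<Rightarrow>\<^sub>0 'k))"
    by (simp add: d2_basis_def)
  then show ?thesis unfolding HH1_bounds_def mem_Collect_eq using N_zero by metis
qed

lemma modN_Bd: "x \<simeq> y \<Longrightarrow> y \<in> Bd \<Longrightarrow> x \<in> Bd"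
  unfolding modN_def using N_Bd Bd_add by fastforce

lemma tensor_sbracket_left: "gen (sbracket X Y r s, w) \<simeq> (\<Sum>k\<in>J. gen (X r k * Y k s, w) - neg_if (tau2 r k s) (gen (Y r k * X k s, w)))"
proof -
  have "gen (sbracket X Y r s, w) \<simeq> gen (\<Sum>k\<in>J. X r k * Y k s, w) - gen (\<Sum>k\<in>J. neg_if (tau2 r k s) (Y r k * X k s), w)"
    unfolding sbracket_def by (rule tensor_diff_left)
  also have "\<dots> \<simeq> (\<Sum>k\<in>J. gen (X r k * Y k s, w)) - (\<Sum>k\<in>J. neg_if (tau2 r k s) (gen (Y r k * X k s, w)))"
  proof (rule modN_diff)
    show "gen (\<Sum>k\<in>J. X r k * Y k s, w) \<simeq> (\<Sum>k\<in>J. gen (X r k * Y k s, w))" by (rule tensor_sum_left)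
    have "gen (\<Sum>k\<in>J. neg_if (tau2 r k s) (Y r k * X k s), w) \<simeq> (\<Sum>k\<in>J. gen (neg_if (tau2 r k s) (Y r k * X k s), w))"
      by (rule tensor_sum_left)
    also have "\<dots> \<simeq> (\<Sum>k\<in>J. neg_if (tau2 r k s) (gen (Y r k * X k s, w)))"
      by (rule modN_sum, rule tensor_neg_if_left)
    finally show "gen (\<Sum>k\<in>J. neg_if (tau2 r k s) (Y r k * X k s), w) \<simeq> (\<Sum>k\<in>J. neg_if (tau2 r k s) (gen (Y r k * X k s, w)))" .
  qed
  finally show ?thesis by (simp add: sum_subtractf)
qed

lemma tensor_sbracket_right: "gen (w, sbracket X Y r s) \<simeq> (\<Sum>k\<in>J. gen (w, X r k * Y k s) - neg_if (tau2 r k s) (gen (w, Y r k * X k s)))"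
proof -
  have "gen (w, sbracket X Y r s) \<simeq> gen (w, \<Sum>k\<in>J. X r k * Y k s) - gen (w, \<Sum>k\<in>J. neg_if (tau2 r k s) (Y r k * X k s))"
    unfolding sbracket_def by (rule tensor_diff_right)
  also have "\<dots> \<simeq> (\<Sum>k\<in>J. gen (w, X r k * Y k s)) - (\<Sum>k\<in>J. neg_if (tau2 r k s) (gen (w, Y r k * X k s)))"
  proof (rule modN_diff)
    show "gen (w, \<Sum>k\<in>J. X r k * Y k s) \<simeq> (\<Sum>k\<in>J. gen (w, X r k * Y k s))" by (rule tensor_sum_right)
    have "gen (w, \<Sum>k\<in>J. neg_if (tau2 r k s) (Y r k * X k s)) \<simeq> (\<Sum>k\<in>J. gen (w, neg_if (tau2 r k s) (Y r k * X k s)))"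
      by (rule tensor_sum_right)
    also have "\<dots> \<simeq> (\<Sum>k\<in>J. neg_if (tau2 r k s) (gen (w, Y r k * X k s)))"
      by (rule modN_sum, rule tensor_neg_if_right)
    finally show "gen (w, \<Sum>k\<in>J. neg_if (tau2 r k s) (Y r k * X k s)) \<simeq> (\<Sum>k\<in>J. neg_if (tau2 r k s) (gen (w, Y r k * X k s)))" .
  qed
  finally show ?thesis by (simp add: sum_subtractf)
qed

lemma omega_sbracket_left: "omega (sbracket X Y) Z \<simeq> (\<Sum>r\<in>J. \<Sum>s\<in>J. \<Sum>k\<in>J.
    smul (idx_sign r) (gen (X r k * Y k s, Z s r)) - smul (idx_sign r) (neg_if (tau2 r k s) (gen (Y r k * X k s, Z s r))))"
  unfolding omega_def
  by (intro modN_sum) (rule modN_trans[OF modN_smul[OF tensor_sbracket_left]], simp add: free.scale_sum_right free.scale_right_diff_distrib)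

lemma omega_sbracket_right: "omega X (sbracket Y Z) \<simeq> (\<Sum>r\<in>J. \<Sum>s\<in>J. \<Sum>k\<in>J.
    smul (idx_sign r) (gen (X r s, Y s k * Z k r)) - smul (idx_sign r) (neg_if (tau2 s k r) (gen (X r s, Z s k * Y k r))))"
  unfolding omega_def
  by (intro modN_sum) (rule modN_trans[OF modN_smul[OF tensor_sbracket_right]], simp add: free.scale_sum_right free.scale_right_diff_distrib)

lemma omega_sbracket_right_reindexed:
  "omega X (sbracket Y Z) \<simeq> (\<Sum>r\<in>J. \<Sum>s\<in>J. \<Sum>k\<in>J.
     smul (idx_sign r) (gen (X r k, Y k s * Z s r))
     - smul (idx_sign k) (neg_if (tau2 s r k) (gen (X k s, Z s r * Y r k))))"
proof -
  have "omega X (sbracket Y Z) \<simeq> (\<Sum>r\<in>J. \<Sum>s\<in>J. \<Sum>k\<in>J.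
      smul (idx_sign r) (gen (X r s, Y s k * Z k r))
      - smul (idx_sign r) (neg_if (tau2 s k r) (gen (X r s, Z s k * Y k r))))"
    by (rule omega_sbracket_right)
  also have "\<dots> = (\<Sum>r\<in>J. \<Sum>s\<in>J. \<Sum>k\<in>J. smul (idx_sign r) (gen (X r s, Y s k * Z k r)))
      - (\<Sum>r\<in>J. \<Sum>s\<in>J. \<Sum>k\<in>J. smul (idx_sign r) (neg_if (tau2 s k r) (gen (X r s, Z s k * Y k r))))"
    by (simp add: sum_subtractf)
  also have "\<dots> = (\<Sum>r\<in>J. \<Sum>s\<in>J. \<Sum>k\<in>J. smul (idx_sign r) (gen (X r k, Y k s * Z s r)))
      - (\<Sum>r\<in>J. \<Sum>s\<in>J. \<Sum>k\<in>J. smul (idx_sign k) (neg_if (tau2 s r k) (gen (X k s, Z s r * Y r k))))"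
    by (subst sum3_swap_inner, subst (2) sum3_swap_outer, rule refl)
  finally show ?thesis
    by (simp add: sum_subtractf)
qed

definition sign_of :: "bool \<Rightarrow> 'k" where "sign_of b = (if b then -1 else 1)"

lemma neg_if_smul: "neg_if b (x :: ('a \<times> 'a \<Rightarrow>\<^sub>0 'k)) = smul (sign_of b) x"
  by (auto simp: neg_if_def sign_of_def)

lemma sgn_par_sign_of: "sgn_par p q = sign_of (p \<and> q)"
  by (simp add: sgn_par_def sign_of_def)

lemma N_tensor_zero_left: "x = 0 \<Longrightarrow> gen (x, w) \<in> N"
  using tensor_zero_left by (simp add: modN_def)

lemma N_tensor_zero_right: "w = 0 \<Longrightarrow> gen (x, w) \<in> N"
  using tensor_zero_right by (simp add: modN_def)

lemma d2_basis_scaled_Bd: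
  assumes "x \<noteq> 0 \<Longrightarrow> y \<noteq> 0 \<Longrightarrow> w \<noteq> 0 \<Longrightarrow> c2 = c1 \<and> c3 = c1"
  shows "smul c1 (gen (x * y, w)) - smul c2 (gen (x, y * w)) - smul c3 (gen (y, w * x)) \<in> Bd"
proof (cases "x \<noteq> 0 \<and> y \<noteq> 0 \<and> w \<noteq> 0")
  case True
  with assms have "c2 = c1" "c3 = c1" by auto
  then have "smul c1 (gen (x * y, w)) - smul c2 (gen (x, y * w)) - smul c3 (gen (y, w * x))
     = smul c1 (gen (x * y, w) - gen (x, y * w) - gen (y, w * x))"
    by (simp add: free.scale_right_diff_distrib)
  then show ?thesis using Bd_smul[OF d2_basis_Bd] by simp
next
  case False
  then have "gen (x * y, w) \<in> N" "gen (x, y * w) \<in> N" "gen (y, w * x) \<in> N"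
    by (auto intro: N_tensor_zero_left N_tensor_zero_right)
  then show ?thesis by (intro N_Bd N_diff N_smul)
qed

text \<open>Each summand of the cocycle identity is the sum of two instances of the Hochschild
  boundary \<open>a\<^sub>0a\<^sub>1 \<otimes> a\<^sub>2 - a\<^sub>0 \<otimes> a\<^sub>1a\<^sub>2 - a\<^sub>1 \<otimes> a\<^sub>2a\<^sub>0\<close>, for the products \<open>X\<^sub>r\<^sub>k Y\<^sub>k\<^sub>s Z\<^sub>s\<^sub>r\<close> and
  \<open>Y\<^sub>r\<^sub>k X\<^sub>k\<^sub>s Z\<^sub>s\<^sub>r\<close>; homogeneity makes the signs match whenever the product is nonzero.\<close>

lemma omega_cocycle_summand:
  assumes hX: "homog_mat p X" and hY: "homog_mat q Y" and hZ: "homog_mat z Z"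
  shows "(smul (idx_sign r) (gen (X r k * Y k s, Z s r))
           - smul (idx_sign r) (neg_if (tau2 r k s) (gen (Y r k * X k s, Z s r))))
       - (smul (idx_sign r) (gen (X r k, Y k s * Z s r))
           - smul (idx_sign k) (neg_if (tau2 s r k) (gen (X k s, Z s r * Y r k))))
       + smul (sgn_par p q) (smul (idx_sign r) (gen (Y r k, X k s * Z s r))
           - smul (idx_sign k) (neg_if (tau2 s r k) (gen (Y k s, Z s r * X r k)))) \<in> Bd"
    (is "?S \<in> Bd")
proof -
  define e :: 'k where "e = sgn_par p q"
  have hom: "\<And>U d i j. homog_mat d U \<Longrightarrow> U i j \<noteq> 0 \<Longrightarrow> tau m i j = d"
    by (auto simp: homog_mat_def)
  have "?S = (smul (idx_sign r) (gen (X r k * Y k s, Z s r)) - smul (idx_sign r) (gen (X r k, Y k s * Z s r))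
           - smul (e * idx_sign k * sign_of (tau2 s r k)) (gen (Y k s, Z s r * X r k)))
      + (smul (- idx_sign r * sign_of (tau2 r k s)) (gen (Y r k * X k s, Z s r))
           - smul (- e * idx_sign r) (gen (Y r k, X k s * Z s r))
           - smul (- idx_sign k * sign_of (tau2 s r k)) (gen (X k s, Z s r * Y r k)))"
    unfolding neg_if_smul e_def by (simp add: free.scale_right_diff_distrib algebra_simps)
  also have "\<dots> \<in> Bd"
  proof (rule Bd_add; rule d2_basis_scaled_Bd)
    assume "X r k \<noteq> 0" "Y k s \<noteq> 0" "Z s r \<noteq> 0"
    then have "tau m r k = p" "tau m k s = q" "tau m s r = z"
      using hom[OF hX] hom[OF hY] hom[OF hZ] by blast+
    then show "idx_sign r = idx_sign r \<and> e * idx_sign k * sign_of (tau2 s r k) = idx_sign r"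
      by (auto simp: e_def sgn_par_sign_of idx_sign_def sign_of_def tau_def)
  next
    assume "Y r k \<noteq> 0" "X k s \<noteq> 0" "Z s r \<noteq> 0"
    then have "tau m r k = q" "tau m k s = p" "tau m s r = z"
      using hom[OF hX] hom[OF hY] hom[OF hZ] by blast+
    then show "- e * idx_sign r = - idx_sign r * sign_of (tau2 r k s)
        \<and> - idx_sign k * sign_of (tau2 s r k) = - idx_sign r * sign_of (tau2 r k s)"
      by (auto simp: e_def sgn_par_sign_of idx_sign_def sign_of_def tau_def)
  qed
  finally show ?thesis .
qed

lemma omega_cocycle:
  assumes hX: "homog_mat p X" and hY: "homog_mat q Y" and hZ: "homog_mat z Z"
  shows "omega (sbracket X Y) Z - omega X (sbracket Y Z) + smul (sgn_par p q) (omega Y (sbracket X Z)) \<in> Bd"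
proof -
  define e :: 'k where "e = sgn_par p q"
  define T1 where "T1 r s k = smul (idx_sign r) (gen (X r k * Y k s, Z s r))
    - smul (idx_sign r) (neg_if (tau2 r k s) (gen (Y r k * X k s, Z s r)))" for r s k
  define T2 where "T2 r s k = smul (idx_sign r) (gen (X r k, Y k s * Z s r))
    - smul (idx_sign k) (neg_if (tau2 s r k) (gen (X k s, Z s r * Y r k)))" for r s k
  define T3 where "T3 r s k = smul (idx_sign r) (gen (Y r k, X k s * Z s r))
    - smul (idx_sign k) (neg_if (tau2 s r k) (gen (Y k s, Z s r * X r k)))" for r s k
  have "omega (sbracket X Y) Z - omega X (sbracket Y Z) + smul e (omega Y (sbracket X Z))
     \<simeq> (\<Sum>r\<in>J. \<Sum>s\<in>J. \<Sum>k\<in>J. T1 r s k) - (\<Sum>r\<in>J. \<Sum>s\<in>J. \<Sum>k\<in>J. T2 r s k)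
       + smul e (\<Sum>r\<in>J. \<Sum>s\<in>J. \<Sum>k\<in>J. T3 r s k)"
    unfolding T1_def T2_def T3_def
    by (intro modN_add modN_diff modN_smul omega_sbracket_left omega_sbracket_right_reindexed)
  also have "\<dots> = (\<Sum>r\<in>J. \<Sum>s\<in>J. \<Sum>k\<in>J. T1 r s k - T2 r s k + smul e (T3 r s k))"
    by (simp add: sum_subtractf sum.distrib free.scale_sum_right)
  finally have "omega (sbracket X Y) Z - omega X (sbracket Y Z) + smul e (omega Y (sbracket X Z))
     \<simeq> (\<Sum>r\<in>J. \<Sum>s\<in>J. \<Sum>k\<in>J. T1 r s k - T2 r s k + smul e (T3 r s k))" .
  moreover have "(\<Sum>r\<in>J. \<Sum>s\<in>J. \<Sum>k\<in>J. T1 r s k - T2 r s k + smul e (T3 r s k)) \<in> Bd"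
    unfolding T1_def T2_def T3_def e_def by (intro Bd_sum omega_cocycle_summand[OF hX hY hZ])
  ultimately show ?thesis
    unfolding e_def by (rule modN_Bd)
qed

lemma sbracket_Emat: "sbracket (Emat i j a) (Emat k l b) r s =
   (if r = i \<and> s = l \<and> j = k \<and> j \<in> J then a * b else 0)
 - (if r = k \<and> s = j \<and> l = i \<and> i \<in> J then neg_if (tau2 k i j) (b * a) else 0)"
proof -
  have 1: "(\<Sum>q\<in>J. Emat i j a r q * Emat k l b q s) = (\<Sum>q\<in>J. if q = j then (if r = i \<and> j = k \<and> s = l then a * b else 0) else 0)"
    by (rule sum.cong) (auto simp: Emat_def)
  have 2: "(\<Sum>q\<in>J. neg_if (tau2 r q s) (Emat k l b r q * Emat i j a q s)) = (\<Sum>q\<in>J. if q = l then (if r = k \<and> l = i \<and> s = j then neg_if (tau2 k i j) (b * a) else 0) else 0)"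
    by (rule sum.cong) (auto simp: Emat_def)
  show ?thesis unfolding sbracket_def 1 2 by (auto simp: sum.delta)
qed

lemma sbracket_zero_right [simp]: "sbracket X (\<lambda>r s. 0) = (\<lambda>r s. 0)"
  by (simp add: sbracket_def fun_eq_iff)

lemma sbracket_zero_left [simp]: "sbracket (\<lambda>r s. 0) Y = (\<lambda>r s. 0)"
  by (simp add: sbracket_def fun_eq_iff)

lemma omega_zero_right: "omega X (\<lambda>r s. 0) \<in> N"
  unfolding omega_def by (intro N_sum N_smul N_tensor_zero_right) simp

lemma omega_zero_left: "omega (\<lambda>r s. 0) Y \<in> N"
  unfolding omega_def by (intro N_sum N_smul N_tensor_zero_left) simp

lemma omega_Emat: "omega (Emat i j a) (Emat k l b) \<simeq>
   (if j = k \<and> i = l \<and> i \<in> J \<and> j \<in> J then smul (idx_sign i) (gen (a, b)) else 0)"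
proof -
  have "omega (Emat i j a) (Emat k l b) \<simeq> (\<Sum>r\<in>J. \<Sum>s\<in>J. if r = i then (if s = j then (if j = k \<and> i = l then smul (idx_sign i) (gen (a, b)) else 0) else 0) else 0)"
    unfolding omega_def
  proof (intro modN_sum)
    fix r s
    show "smul (idx_sign r) (gen (Emat i j a r s, Emat k l b s r)) \<simeq>
      (if r = i then (if s = j then (if j = k \<and> i = l then smul (idx_sign i) (gen (a, b)) else 0) else 0) else 0)"
    proof (cases "r = i \<and> s = j \<and> j = k \<and> i = l")
      case True then show ?thesis by (simp add: Emat_def)
    next
      case False
      then have "gen (Emat i j a r s, Emat k l b s r) \<in> N"
        by (auto simp: Emat_def intro: N_tensor_zero_left N_tensor_zero_right)
      then have "smul (idx_sign r) (gen (Emat i j a r s, Emat k l b s r)) \<simeq> 0"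
        by (simp add: modN_N N_smul)
      with False show ?thesis by auto
    qed
  qed
  also have "\<dots> = (\<Sum>r\<in>J. if r = i then (if j \<in> J then (if j = k \<and> i = l then smul (idx_sign i) (gen (a, b)) else 0) else 0) else 0)"
    by (rule sum.cong) (auto simp: sum.delta)
  also have "\<dots> = (if j = k \<and> i = l \<and> i \<in> J \<and> j \<in> J then smul (idx_sign i) (gen (a, b)) else 0)"
    by (auto simp: sum.delta)
  finally show ?thesis .
qed

lemma omega_Emat_N: "\<not> (j = k \<and> i = l) \<Longrightarrow> omega (Emat i j a) (Emat k l b) \<in> N"
  using omega_Emat[of i j a k l b] by (cases "j = k") (auto simp: modN_def)

lemma psi_v: "psi (v i j a) = Emat i j a"
  by (auto simp: fun_eq_iff)

lemma psi_br: "psi (br f g) = sbracket (psi f) (psi g)"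
  by (rule ext, rule ext, rule psi_br_entry)

lemma Omega_br_v: "Omega (br (v i j a) (v k l b)) \<simeq> omega (Emat i j a) (Emat k l b)"
proof -
  have "psi (v i j a) = Emat i j a" "psi (v k l b) = Emat k l b"
    by (auto simp: fun_eq_iff)
  then show ?thesis using Omega_br[of "v i j a" "v k l b"] by simp
qed

lemma sc_sgn_par: "sc (sgn_par p q) x = neg_if (p \<and> q) x"
  by (auto simp: sgn_par_def)

lemma leibniz_psi_Omega:
  assumes "a \<in> FL" "b \<in> FL" "c \<in> FL" "homog m p a" "homog m q b" "homog m r c"
  defines "x \<equiv> br (br a b) c - br a (br b c) + smul (sgn_par p q) (br b (br a c))"
  shows "psi x = (\<lambda>r s. 0) \<and> Omega x \<in> Bd"
proof
  have hom: "homog_mat p (psi a)" "homog_mat q (psi b)" "homog_mat r (psi c)"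
    using assms by (auto intro: homog_mat_psi)
  show "psi x = (\<lambda>r s. 0)"
    using sbracket_leibniz[OF hom]
    by (simp add: fun_eq_iff x_def psi_add psi_diff psi_smul psi_br sc_sgn_par)
  have "Omega x \<simeq> omega (sbracket (psi a) (psi b)) (psi c) - omega (psi a) (sbracket (psi b) (psi c))
        + smul (sgn_par p q) (omega (psi b) (sbracket (psi a) (psi c)))"
    unfolding x_def Omega_add Omega_diff Omega_smul
    by (intro modN_add modN_diff modN_smul) (simp_all add: Omega_br[THEN modN_trans] psi_br)
  then show "Omega x \<in> Bd"
    by (rule modN_Bd) (rule omega_cocycle[OF hom])
qed

lemma N_modN_Bd: "x \<simeq> y \<Longrightarrow> y \<in> N \<Longrightarrow> x \<in> Bd"
  using modN_Bd N_Bd by blast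

lemma stl_rels_psi_Omega:
  assumes "x \<in> stl_rels sc m n"
  shows "psi x = (\<lambda>r s. 0) \<and> Omega x \<in> Bd"
  using assms unfolding stl_rels_def
proof (elim UnE CollectE exE conjE)
  fix a b c p q r
  assume "x = br (br a b) c - br a (br b c) + smul (sgn_par p q) (br b (br a c))"
    "a \<in> FL" "b \<in> FL" "c \<in> FL" "homog m p a" "homog m q b" "homog m r c"
  then show ?thesis
    using leibniz_psi_Omega by blast
next
  fix i j c a b
  assume "x = v i j (sc c a + b) - smul c (v i j a) - v i j b"
  then show ?thesis
    by (simp add: fun_eq_iff psi_diff psi_smul Omega_diff Omega_smul Emat_def alg.scale_right_distrib)
next
  fix i j k l a b
  assume x: "x = br (v i j a) (v k l b)"
    and h: "{i, j, k, l} \<subseteq> J" "i \<noteq> j" "k \<noteq> l" "i \<noteq> l" "j \<noteq> k"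
  have "psi x = (\<lambda>r s. 0)"
    unfolding x psi_br psi_v using h by (simp add: fun_eq_iff sbracket_Emat)
  moreover have "Omega x \<in> Bd"
    unfolding x using Omega_br_v omega_Emat_N h by (blast intro: N_modN_Bd)
  ultimately show ?thesis ..
next
  fix i j l a b
  assume x: "x = br (v i j a) (v j l b) - v i l (a * b)"
    and h: "{i, j, l} \<subseteq> J" "i \<noteq> j" "j \<noteq> l" "i \<noteq> l"
  have "psi x = (\<lambda>r s. 0)"
    unfolding fun_eq_iff x psi_diff psi_br psi_v sbracket_Emat using h by (auto simp: Emat_def)
  moreover have "Omega x \<in> Bd"
    unfolding x Omega_diff Omega_v using Omega_br_v omega_Emat_N h by (simp, blast intro: N_modN_Bd)
  ultimately show ?thesis ..
next
  fix i j k a b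
  assume x: "x = br (v i j a) (v k i b) + smul (sgn_par (tau m i j) (tau m k i)) (v k j (b * a))"
    and h: "{i, j, k} \<subseteq> J" "i \<noteq> j" "k \<noteq> i" "j \<noteq> k"
  have "psi x = (\<lambda>r s. 0)"
    unfolding fun_eq_iff x psi_add psi_smul psi_br psi_v sbracket_Emat using h
    by (auto simp: Emat_def sc_sgn_par neg_if_def tau_sym)
  moreover have "Omega x \<in> Bd"
    unfolding x Omega_add Omega_smul Omega_v using Omega_br_v omega_Emat_N h by (simp, blast intro: N_modN_Bd)
  ultimately show ?thesis ..
qed

lemma ideal_psi_Omega: "x \<in> I \<Longrightarrow> psi x = (\<lambda>r s. 0) \<and> Omega x \<in> Bd"
  unfolding stl_ideal_def
proof (induct rule: alg_ideal.induct)
  case (rel x)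
  then show ?case by (rule stl_rels_psi_Omega)
next
  case zero
  show ?case by (simp add: fun_eq_iff)
next
  case (add x y)
  then show ?case by (simp add: fun_eq_iff psi_add Omega_add Bd_add)
next
  case (scal x c)
  then show ?case by (simp add: fun_eq_iff psi_smul Omega_smul Bd_smul)
next
  case (left x f)
  then show ?case
    using Omega_br[of f x] omega_zero_right[of "psi f"] by (auto simp: psi_br intro: N_modN_Bd)
next
  case (right x f)
  then show ?case
    using Omega_br[of x f] omega_zero_left[of "psi f"] by (auto simp: psi_br intro: N_modN_Bd)
qed

abbreviation d1' where "d1' \<equiv> d1 sc"

lemma d1_lin_ext: "d1' f = lin_ext sc (\<lambda>p. fst p * snd p - snd p * fst p) f"
  by (simp add: d1_def lin_ext_def)

lemma d1_add: "d1' (f + g) = d1' f + d1' g" by (simp add: d1_lin_ext alg.lin_ext_add)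

lemma d1_smul: "d1' (smul c f) = sc c (d1' f)" by (simp add: d1_lin_ext alg.lin_ext_smul)

lemma d1_sum: "d1' (sum F A) = (\<Sum>x\<in>A. d1' (F x))" by (simp add: d1_lin_ext alg.lin_ext_sum)

lemma d1_gen: "d1' (gen (a, b)) = a * b - b * a" by (simp add: d1_lin_ext alg.lin_ext_gen)

lemma d1_zero [simp]: "d1' 0 = 0" by (simp add: d1_lin_ext)

definition supertrace :: "'a mat \<Rightarrow> 'a" where "supertrace X = (\<Sum>r\<in>J. sc (idx_sign r) (X r r))"

lemma sc_neg_if: "sc c (neg_if b x) = sc (c * sign_of b) x"
  by (auto simp: neg_if_def sign_of_def)

lemma idx_sign_tau: "idx_sign r * sign_of (tau m r k) = idx_sign k"
  by (auto simp: idx_sign_def sign_of_def tau_def)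

lemma d1_omega: "d1' (omega X Y) = supertrace (sbracket X Y)"
proof -
  have "d1' (omega X Y) = (\<Sum>r\<in>J. \<Sum>s\<in>J. sc (idx_sign r) (X r s * Y s r)) - (\<Sum>r\<in>J. \<Sum>s\<in>J. sc (idx_sign r) (Y s r * X r s))"
    unfolding omega_def by (simp add: d1_sum d1_smul d1_gen alg.scale_right_diff_distrib sum_subtractf)
  also have "(\<Sum>r\<in>J. \<Sum>s\<in>J. sc (idx_sign r) (Y s r * X r s)) = (\<Sum>s\<in>J. \<Sum>r\<in>J. sc (idx_sign r) (Y s r * X r s))"
    by (rule sum.swap)
  also have "\<dots> = (\<Sum>r\<in>J. \<Sum>k\<in>J. sc (idx_sign r) (neg_if (tau m r k) (Y r k * X k r)))"
    by (intro sum.cong refl) (simp add: sc_neg_if idx_sign_tau)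
  finally have 1: "d1' (omega X Y) = (\<Sum>r\<in>J. \<Sum>s\<in>J. sc (idx_sign r) (X r s * Y s r)) - (\<Sum>r\<in>J. \<Sum>k\<in>J. sc (idx_sign r) (neg_if (tau m r k) (Y r k * X k r)))" .
  have "supertrace (sbracket X Y) = (\<Sum>r\<in>J. \<Sum>s\<in>J. sc (idx_sign r) (X r s * Y s r)) - (\<Sum>r\<in>J. \<Sum>k\<in>J. sc (idx_sign r) (neg_if (tau m r k) (Y r k * X k r)))"
    unfolding supertrace_def sbracket_def
    by (simp add: alg.scale_right_diff_distrib alg.scale_sum_right sum_subtractf tau_sym[of m _ r])
  with 1 show ?thesis by simp
qed

lemma supertrace_psi: "supertrace (psi f) = lin_ext sc (\<lambda>t. supertrace (mev m n t)) f"
proof -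
  have "supertrace (psi f) = (\<Sum>r\<in>J. sc (idx_sign r) (\<Sum>t\<in>Poly_Mapping.keys f. sc (Poly_Mapping.lookup f t) (mev m n t r r)))"
    by (simp add: supertrace_def evalF_def)
  also have "\<dots> = lin_ext sc (\<lambda>t. supertrace (mev m n t)) f"
    unfolding lin_ext_def supertrace_def
    by (simp add: alg.scale_sum_right sum.swap[of _ J] mult.commute)
  finally show ?thesis .
qed

lemma d1_Omega: "f \<in> FL \<Longrightarrow> d1' (Omega f) = supertrace (psi f)"
proof -
  assume f: "f \<in> FL"
  have "d1' (Omega f) = lin_ext sc (\<lambda>t. d1' (Omega_tree t)) f"
    unfolding Omega_def by (rule lin_ext_hom) (simp_all add: d1_add d1_smul)
  also have "\<dots> = lin_ext sc (\<lambda>t. supertrace (mev m n t)) f"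
  proof (rule lin_ext_cong_keys)
    fix t assume "t \<in> Poly_Mapping.keys f"
    with f have vt: "valid m n t" by (simp add: FreeL_def)
    show "d1' (Omega_tree t) = supertrace (mev m n t)"
    proof (cases t)
      case (Gen i j a)
      with vt have "i \<noteq> j" by simp
      then show ?thesis by (auto simp: Gen Omega_tree_def supertrace_def Emat_def intro!: sum.neutral)
    next
      case (Br s t')
      then show ?thesis by (simp add: Omega_tree_def d1_omega sbr_eq_sbracket homog_mat_mev)
    qed
  qed
  finally show ?thesis by (simp add: supertrace_psi)
qed

lemma Omega_ker_cycle: "f \<in> ker_psi sc m n \<Longrightarrow> Omega f \<in> HH1_cycles sc"
proof -
  assume "f \<in> ker_psi sc m n"
  then have f: "f \<in> FL" "psi f = (\<lambda>r s. 0)" by (auto simp: ker_psi_def)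
  then show ?thesis by (simp add: HH1_cycles_def d1_Omega supertrace_def)
qed

section \<open>Lifting cycles\<close>

definition h :: "nat \<Rightarrow> nat \<Rightarrow> 'a \<Rightarrow> 'a \<Rightarrow> ('a tr \<Rightarrow>\<^sub>0 'k)" where
  "h i j a b = br (v i j a) (v j i b)"

definition hs :: "nat \<Rightarrow> nat \<Rightarrow> 'a \<Rightarrow> 'a \<Rightarrow> ('a tr \<Rightarrow>\<^sub>0 'k)" where
  "hs i j a b = smul (idx_sign i) (h i j a b)"

text \<open>The inverse of \<^const>\<open>Omega\<close> up to boundaries; the correction term \<open>h\<^sub>1\<^sub>2(1,ab)\<close> puts
  the value into the kernel of \<open>\<psi>\<close> whenever the argument is a cycle.\<close>

definition lift :: "('a \<times> 'a \<Rightarrow>\<^sub>0 'k) \<Rightarrow> ('a tr \<Rightarrow>\<^sub>0 'k)" where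
  "lift u = lin_ext smul (\<lambda>p. hs 1 2 (fst p) (snd p) - hs 1 2 1 (fst p * snd p)) u"

lemma h_FL: "offdiag i j \<Longrightarrow> h i j a b \<in> FL"
  by (simp add: h_def FL_br v_FL offdiag_sym)

lemma hs_FL: "offdiag i j \<Longrightarrow> hs i j a b \<in> FL"
  by (simp add: hs_def h_FL FL_smul)

lemma lift_FL: "lift u \<in> FL"
  unfolding lift_def by (intro FL_lin_ext FL_diff hs_FL offdiag_small)

lemma idx_sign_square: "idx_sign i * idx_sign i = 1" by (simp add: idx_sign_def)

lemma psi_h: "offdiag i j \<Longrightarrow> psi (h i j a b) r s =
   (if r = i \<and> s = i then a * b else 0) - (if r = j \<and> s = j then neg_if (tau m j i) (b * a) else 0)"
  by (auto simp: h_def psi_br psi_v sbracket_Emat offdiag_def)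

lemma psi_hs: "offdiag i j \<Longrightarrow> psi (hs i j a b) r s =
   sc (idx_sign i) ((if r = i \<and> s = i then a * b else 0) - (if r = j \<and> s = j then neg_if (tau m j i) (b * a) else 0))"
  by (simp add: hs_def psi_smul psi_h)

lemma Omega_h: "offdiag i j \<Longrightarrow> Omega (h i j a b) \<simeq> smul (idx_sign i) (gen (a, b))"
  unfolding h_def using Omega_br_v[of i j a j i b] omega_Emat[of i j a j i b]
  by (auto simp: offdiag_def intro: modN_trans)

lemma Omega_hs: "offdiag i j \<Longrightarrow> Omega (hs i j a b) \<simeq> gen (a, b)"
proof -
  assume "offdiag i j"
  then have "Omega (hs i j a b) \<simeq> smul (idx_sign i) (smul (idx_sign i) (gen (a, b)))"
    unfolding hs_def Omega_smul by (intro modN_smul Omega_h)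
  then show ?thesis by (simp add: idx_sign_square)
qed

lemma lift_add: "lift (u + u') = lift u + lift u'" by (simp add: lift_def free.lin_ext_add)

lemma lift_smul: "lift (smul c u) = smul c (lift u)" by (simp add: lift_def free.lin_ext_smul)

lemma lift_diff: "lift (u - u') = lift u - lift u'" by (simp add: lift_def free.lin_ext_diff)

lemma lift_zero [simp]: "lift 0 = 0" by (simp add: lift_def)

lemma lift_gen: "lift (gen (a, b)) = hs 1 2 a b - hs 1 2 1 (a * b)"
  by (simp add: lift_def free.lin_ext_gen)

lemma tensor_one_left_Bd: "gen (1, x) \<in> Bd"
  using Bd_neg[OF d2_basis_Bd[of 1 1 x]] by simp

lemma Omega_lift: "Omega (lift u) - u \<in> Bd"
proof -
  have "Omega (lift u) = lin_ext smul (\<lambda>p. Omega (hs 1 2 (fst p) (snd p) - hs 1 2 1 (fst p * snd p))) u"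
    unfolding lift_def by (rule lin_ext_hom) (simp_all add: Omega_add Omega_smul)
  also have "\<dots> \<simeq> lin_ext smul (\<lambda>p. gen p - gen (1, fst p * snd p)) u"
    by (rule lin_ext_modN) (auto simp: Omega_diff intro!: modN_diff Omega_hs offdiag_small)
  also have "\<dots> = u - lin_ext smul (\<lambda>p. gen (1, fst p * snd p)) u"
    by (simp add: free.lin_ext_fun_diff lin_ext_gen_id)
  finally have "Omega (lift u) - u \<simeq> - lin_ext smul (\<lambda>p. gen (1, fst p * snd p)) u"
    by (simp add: modN_def algebra_simps)
  moreover have "lin_ext smul (\<lambda>p. gen (1, fst p * snd p)) u \<in> Bd"
    unfolding lin_ext_def by (intro Bd_sum Bd_smul tensor_one_left_Bd)
  ultimately show ?thesis
    using Bd_neg modN_Bd by blast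
qed

lemma psi_lift_entry: "\<not> (r = 2 \<and> s = 2) \<Longrightarrow> psi (lift u) r s = 0"
proof -
  assume rs: "\<not> (r = 2 \<and> s = 2)"
  have "psi (lift u) r s = lin_ext sc (\<lambda>p. psi (hs 1 2 (fst p) (snd p) - hs 1 2 1 (fst p * snd p)) r s) u"
    unfolding lift_def by (rule lin_ext_hom) (simp_all add: psi_add psi_smul)
  also have "\<dots> = lin_ext sc (\<lambda>p. 0) u"
    using rs offdiag_small by (intro arg_cong[where f = "\<lambda>F. lin_ext sc F u"] ext) (auto simp: psi_diff psi_hs)
  finally show ?thesis by (simp add: lin_ext_def)
qed

lemma psi_lift_cycle: "d1' u = 0 \<Longrightarrow> psi (lift u) r s = 0"
proof -
  assume d: "d1' u = 0"
  have "psi (lift u) r s = lin_ext sc (\<lambda>p. psi (hs 1 2 (fst p) (snd p) - hs 1 2 1 (fst p * snd p)) r s) u"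
    unfolding lift_def by (rule lin_ext_hom) (simp_all add: psi_add psi_smul)
  also have "\<dots> = lin_ext sc (\<lambda>p. (if r = 2 \<and> s = 2 then sc (idx_sign 1) (neg_if (tau m 2 1) (fst p * snd p - snd p * fst p)) else 0)) u"
    using offdiag_small by (intro arg_cong[where f = "\<lambda>F. lin_ext sc F u"] ext)
      (auto simp: psi_diff psi_hs neg_if_def alg.scale_right_diff_distrib)
  also have "\<dots> = (if r = 2 \<and> s = 2 then sc (idx_sign 1) (neg_if (tau m 2 1) (d1' u)) else 0)"
    by (auto simp: d1_lin_ext lin_ext_def alg.scale_sum_right neg_if_sum sc_neg_if mult.commute)
  finally show ?thesis using d by simp
qed

lemma h_add_left: "offdiag i j \<Longrightarrow> h i j (a + a') b \<approx> h i j a b + h i j a' b"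
  unfolding h_def br_add_left[symmetric] by (intro modI_br_left v_add v_FL[OF offdiag_sym])

lemma h_add_right: "offdiag i j \<Longrightarrow> h i j a (b + b') \<approx> h i j a b + h i j a b'"
  unfolding h_def br_add_right[symmetric] by (intro modI_br_right v_add[OF offdiag_sym] v_FL)

lemma h_scale_left: "offdiag i j \<Longrightarrow> h i j (sc c a) b \<approx> smul c (h i j a b)"
  unfolding h_def br_smul_left[symmetric] by (intro modI_br_left v_sc v_FL[OF offdiag_sym])

lemma h_scale_right: "offdiag i j \<Longrightarrow> h i j a (sc c b) \<approx> smul c (h i j a b)"
  unfolding h_def br_smul_right[symmetric] by (intro modI_br_right v_sc[OF offdiag_sym] v_FL)

lemma hs_add_left: "offdiag i j \<Longrightarrow> hs i j (a + a') b \<approx> hs i j a b + hs i j a' b"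
  unfolding hs_def free.scale_right_distrib[symmetric] by (intro modI_smul h_add_left)

lemma hs_add_right: "offdiag i j \<Longrightarrow> hs i j a (b + b') \<approx> hs i j a b + hs i j a b'"
  unfolding hs_def free.scale_right_distrib[symmetric] by (intro modI_smul h_add_right)

lemma hs_scale_left: "offdiag i j \<Longrightarrow> hs i j (sc c a) b \<approx> smul c (hs i j a b)"
proof -
  assume "offdiag i j"
  then have "h i j (sc c a) b \<approx> smul c (h i j a b)" by (rule h_scale_left)
  then have "smul (idx_sign i) (h i j (sc c a) b) \<approx> smul (idx_sign i) (smul c (h i j a b))" by (rule modI_smul)
  then show ?thesis unfolding hs_def by (simp add: mult.commute)
qed

lemma hs_scale_right: "offdiag i j \<Longrightarrow> hs i j a (sc c b) \<approx> smul c (hs i j a b)"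
proof -
  assume "offdiag i j"
  then have "h i j a (sc c b) \<approx> smul c (h i j a b)" by (rule h_scale_right)
  then have "smul (idx_sign i) (h i j a (sc c b)) \<approx> smul (idx_sign i) (smul c (h i j a b))" by (rule modI_smul)
  then show ?thesis unfolding hs_def by (simp add: mult.commute)
qed

lemma hs_zero_right: "offdiag i j \<Longrightarrow> hs i j a 0 \<approx> 0"
  using hs_scale_right[of i j a 0 0] by simp

lemma idx_sign_rel: "idx_sign i * (sgn_par (tau m i k) (tau m k j) * sgn_par (tau m i k) (tau m j i)) = idx_sign k"
  by (auto simp: idx_sign_def sgn_par_def tau_def)

text \<open>Expand \<open>v\<^sub>i\<^sub>j(ab) = [v\<^sub>i\<^sub>k(a), v\<^sub>k\<^sub>j(b)]\<close> in \<open>h\<^sub>i\<^sub>j(ab,c)\<close> by the Leibniz rule.\<close>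

lemma hs_mult:
  assumes ij: "offdiag i j" and ik: "offdiag i k" and kj: "offdiag k j"
  shows "hs i j (a * b) c \<approx> hs i k a (b * c) + hs k j b (c * a)"
proof -
  have ji: "offdiag j i" and ki: "offdiag k i" and jk: "offdiag j k" using ij ik kj by (auto simp: offdiag_def)
  have FL: "v i k a \<in> FL" "v k j b \<in> FL" "v j i c \<in> FL" "v k i (b * c) \<in> FL" "v j k (c * a) \<in> FL"
    using ij ik kj ji ki jk by (auto intro: v_FL)
  define s1 :: 'k where "s1 = sgn_par (tau m i k) (tau m k j)"
  define s2 :: 'k where "s2 = sgn_par (tau m i k) (tau m j i)"
  have "h i j (a * b) c = br (v i j (a * b)) (v j i c)" by (simp add: h_def)
  also have "\<dots> \<approx> br (br (v i k a) (v k j b)) (v j i c)"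
    by (rule modI_br_left[OF modI_sym[OF rel3_modI[OF ik kj]]]) (use ij FL in \<open>auto simp: offdiag_def\<close>)
  also have "\<dots> \<approx> br (v i k a) (br (v k j b) (v j i c)) - smul s1 (br (v k j b) (br (v i k a) (v j i c)))"
    unfolding s1_def by (rule leibniz_left[OF FL(1-3) homog_v homog_v homog_v])
  also have "\<dots> \<approx> br (v i k a) (v k i (b * c)) - smul s1 (br (v k j b) (- smul s2 (v j k (c * a))))"
  proof (rule modI_diff)
    show "br (v i k a) (br (v k j b) (v j i c)) \<approx> br (v i k a) (v k i (b * c))"
      by (rule modI_br_right[OF rel3_modI[OF kj ji]]) (use ik FL in \<open>auto simp: offdiag_def\<close>)
    show "smul s1 (br (v k j b) (br (v i k a) (v j i c))) \<approx> smul s1 (br (v k j b) (- smul s2 (v j k (c * a))))"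
      unfolding s2_def
      by (rule modI_smul, rule modI_br_right[OF rel4_modI[OF ik ji]]) (use kj FL in \<open>auto simp: offdiag_def\<close>)
  qed
  also have "\<dots> = h i k a (b * c) + smul (s1 * s2) (h k j b (c * a))"
    by (simp add: h_def br_neg_right br_smul_right)
  finally have e: "h i j (a * b) c \<approx> h i k a (b * c) + smul (s1 * s2) (h k j b (c * a))" .
  have "hs i j (a * b) c \<approx> smul (idx_sign i) (h i k a (b * c) + smul (s1 * s2) (h k j b (c * a)))"
    unfolding hs_def by (rule modI_smul[OF e])
  also have "\<dots> = hs i k a (b * c) + hs k j b (c * a)"
    using idx_sign_rel[of i k j] by (simp add: hs_def free.scale_right_distrib s1_def s2_def)
  finally show ?thesis .
qed

lemma hs_split_left: "offdiag i j \<Longrightarrow> offdiag i k \<Longrightarrow> offdiag k j \<Longrightarrow> hs i j a c \<approx> hs i k a c + hs k j 1 (c * a)"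
  using hs_mult[of i j k a 1 c] by simp

lemma hs_split_right: "offdiag i j \<Longrightarrow> offdiag i k \<Longrightarrow> offdiag k j \<Longrightarrow> hs i j b c \<approx> hs i k 1 (b * c) + hs k j b c"
  using hs_mult[of i j k 1 b c] by simp

lemma hs_one_split: "offdiag i j \<Longrightarrow> offdiag i k \<Longrightarrow> offdiag k j \<Longrightarrow> hs i j 1 c \<approx> hs i k 1 c + hs k j 1 c"
  using hs_split_right[of i j k 1 c] by simp

lemma hs_one_antisym: "offdiag j k \<Longrightarrow> hs k j 1 c \<approx> - hs j k 1 c"
proof -
  assume jk: "offdiag j k"
  then obtain i where i: "i \<in> J" "i \<noteq> j" "i \<noteq> k" using exists_third_idx[of j k] by (auto simp: offdiag_def)
  have ij: "offdiag i j" and ik: "offdiag i k" and kj: "offdiag k j" using i jk by (auto simp: offdiag_def)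
  have 1: "hs i j 1 c - (hs i k 1 c + hs k j 1 c) \<in> I" using hs_one_split[OF ij ik kj] by (simp add: modI_def)
  have 2: "hs i k 1 c - (hs i j 1 c + hs j k 1 c) \<in> I" using hs_one_split[OF ik ij jk] by (simp add: modI_def)
  have "hs k j 1 c - - hs j k 1 c = - ((hs i j 1 c - (hs i k 1 c + hs k j 1 c)) + (hs i k 1 c - (hs i j 1 c + hs j k 1 c)))"
    by (simp add: algebra_simps)
  also have "\<dots> \<in> I" using 1 2 by (intro I_neg I_add)
  finally show ?thesis by (simp add: modI_def)
qed

lemma lift_d2_basis: "lift (gen (a0 * a1, a2) - gen (a0, a1 * a2) - gen (a1, a2 * a0)) \<in> I"
proof -
  define x where "x = a1 * a2 * a0"
  have 1: "hs 1 2 (a0 * a1) a2 - (hs 1 3 a0 (a1 * a2) + hs 3 2 a1 (a2 * a0)) \<in> I"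
    using hs_mult[of 1 2 3 a0 a1 a2] by (simp add: modI_def)
  have 2: "hs 1 3 a0 (a1 * a2) - (hs 1 2 a0 (a1 * a2) + hs 2 3 1 x) \<in> I"
    using hs_split_left[of 1 3 2 a0 "a1 * a2"] by (simp add: modI_def x_def)
  have 3: "hs 1 2 a1 (a2 * a0) - (hs 1 3 1 x + hs 3 2 a1 (a2 * a0)) \<in> I"
    using hs_split_right[of 1 2 3 a1 "a2 * a0"] by (simp add: modI_def x_def mult.assoc)
  have 4: "hs 1 3 1 x - (hs 1 2 1 x + hs 2 3 1 x) \<in> I"
    using hs_one_split[of 1 3 2 x] by (simp add: modI_def)
  have "lift (gen (a0 * a1, a2) - gen (a0, a1 * a2) - gen (a1, a2 * a0))
      = (hs 1 2 (a0 * a1) a2 - hs 1 2 1 (a0 * a1 * a2)) - (hs 1 2 a0 (a1 * a2) - hs 1 2 1 (a0 * (a1 * a2)))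
        - (hs 1 2 a1 (a2 * a0) - hs 1 2 1 (a1 * (a2 * a0)))"
    by (simp add: lift_diff lift_gen)
  also have "\<dots> = (hs 1 2 (a0 * a1) a2 - (hs 1 3 a0 (a1 * a2) + hs 3 2 a1 (a2 * a0)))
     + (hs 1 3 a0 (a1 * a2) - (hs 1 2 a0 (a1 * a2) + hs 2 3 1 x))
     - (hs 1 2 a1 (a2 * a0) - (hs 1 3 1 x + hs 3 2 a1 (a2 * a0)))
     - (hs 1 3 1 x - (hs 1 2 1 x + hs 2 3 1 x))"
    by (simp add: x_def mult.assoc algebra_simps)
  also have "\<dots> \<in> I" by (rule I_diff[OF I_diff[OF I_add[OF 1 2] 3] 4])
  finally show ?thesis .
qed

lemma modI_diff_in_I: "x \<approx> y \<Longrightarrow> x - y \<in> I"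
  by (simp add: modI_def)

lemma lift_bilin_rels: "x \<in> bilin_rels sc \<Longrightarrow> lift x \<in> I"
  unfolding bilin_rels_def
proof (elim UnE CollectE exE conjE)
  fix a a' b assume x: "x = gen (a + a', b) - gen (a, b) - gen (a', b)"
  have "lift x = (hs 1 2 (a + a') b - (hs 1 2 a b + hs 1 2 a' b))
     - (hs 1 2 1 (a * b + a' * b) - (hs 1 2 1 (a * b) + hs 1 2 1 (a' * b)))"
    by (simp add: x lift_diff lift_add lift_gen distrib_right algebra_simps)
  also have "\<dots> \<in> I" by (intro I_diff modI_diff_in_I hs_add_left hs_add_right offdiag_small)
  finally show ?thesis .
next
  fix a b b' assume x: "x = gen (a, b + b') - gen (a, b) - gen (a, b')"
  have "lift x = (hs 1 2 a (b + b') - (hs 1 2 a b + hs 1 2 a b'))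
     - (hs 1 2 1 (a * b + a * b') - (hs 1 2 1 (a * b) + hs 1 2 1 (a * b')))"
    by (simp add: x lift_diff lift_add lift_gen distrib_left algebra_simps)
  also have "\<dots> \<in> I" by (intro I_diff modI_diff_in_I hs_add_right offdiag_small)
  finally show ?thesis .
next
  fix c a b assume x: "x = gen (sc c a, b) - smul c (gen (a, b))"
  have "lift x = (hs 1 2 (sc c a) b - smul c (hs 1 2 a b)) - (hs 1 2 1 (sc c (a * b)) - smul c (hs 1 2 1 (a * b)))"
    by (simp add: x lift_diff lift_gen lift_smul sc_mult_left free.scale_right_diff_distrib algebra_simps)
  also have "\<dots> \<in> I" by (intro I_diff modI_diff_in_I hs_scale_left hs_scale_right offdiag_small)
  finally show ?thesis .
next
  fix c a b assume x: "x = gen (a, sc c b) - smul c (gen (a, b))"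
  have "lift x = (hs 1 2 a (sc c b) - smul c (hs 1 2 a b)) - (hs 1 2 1 (sc c (a * b)) - smul c (hs 1 2 1 (a * b)))"
    by (simp add: x lift_diff lift_gen lift_smul sc_mult_right free.scale_right_diff_distrib algebra_simps)
  also have "\<dots> \<in> I" by (intro I_diff modI_diff_in_I hs_scale_right offdiag_small)
  finally show ?thesis .
qed

lemma lift_N: "x \<in> N \<Longrightarrow> lift x \<in> I"
  unfolding tensor_null_def
proof (induct rule: free.span_induct_alt)
  case base then show ?case by simp
next
  case (step c x y) then show ?case by (simp add: lift_add lift_smul I_add I_smul lift_bilin_rels)
qed

lemma lift_Bd: "x \<in> Bd \<Longrightarrow> lift x \<in> I"
proof -
  assume "x \<in> Bd"
  then obtain g b where x: "x = d2 g + b" and b: "b \<in> N" unfolding HH1_bounds_def by blast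
  have "lift (d2 g) = lin_ext smul (\<lambda>q. lift (d2_basis q)) g"
    unfolding d2_lin_ext by (rule lin_ext_hom) (simp_all add: lift_add lift_smul)
  also have "\<dots> \<in> I"
    unfolding lin_ext_def by (intro I_sum I_smul) (auto simp: d2_basis_def lift_d2_basis split: prod.split)
  finally show ?thesis using x lift_N[OF b] by (simp add: lift_add I_add)
qed

section \<open>Modulo I, FL is spanned by the \<open>v\<^sub>i\<^sub>j(a)\<close> and the \<open>h\<^sub>i\<^sub>j(a,b)\<close>\<close>

definition span_mod_I :: "('a tr \<Rightarrow>\<^sub>0 'k) set \<Rightarrow> ('a tr \<Rightarrow>\<^sub>0 'k) set" where
  "span_mod_I S = {x. \<exists>y\<in>free.span S. x \<approx> y}"

lemma span_mod_I_modI: "x \<approx> y \<Longrightarrow> y \<in> span_mod_I S \<Longrightarrow> x \<in> span_mod_I S"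
  unfolding span_mod_I_def using modI_trans by blast

lemma span_mod_I_span: "y \<in> free.span S \<Longrightarrow> y \<in> span_mod_I S"
  unfolding span_mod_I_def using modI_refl by blast

lemma span_mod_I_base: "y \<in> S \<Longrightarrow> y \<in> span_mod_I S"
  by (intro span_mod_I_span free.span_base)

lemma span_mod_I_mono: "S \<subseteq> T \<Longrightarrow> x \<in> span_mod_I S \<Longrightarrow> x \<in> span_mod_I T"
  unfolding span_mod_I_def using free.span_mono by blast

lemma span_mod_I_zero: "0 \<in> span_mod_I S"
  by (intro span_mod_I_span free.span_zero)

lemma span_mod_I_add: "x \<in> span_mod_I S \<Longrightarrow> y \<in> span_mod_I S \<Longrightarrow> x + y \<in> span_mod_I S"
  unfolding span_mod_I_def by (blast intro: free.span_add modI_add)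

lemma span_mod_I_smul: "x \<in> span_mod_I S \<Longrightarrow> smul c x \<in> span_mod_I S"
  unfolding span_mod_I_def by (blast intro: free.span_scale modI_smul)

lemma span_mod_I_neg: "x \<in> span_mod_I S \<Longrightarrow> - x \<in> span_mod_I S"
  using span_mod_I_smul[of x S "-1"] by simp

lemma span_mod_I_diff: "x \<in> span_mod_I S \<Longrightarrow> y \<in> span_mod_I S \<Longrightarrow> x - y \<in> span_mod_I S"
  using span_mod_I_add[of x S "- y"] span_mod_I_neg[of y S] by simp

lemma span_mod_I_sum: "(\<And>x. x \<in> A \<Longrightarrow> F x \<in> span_mod_I S) \<Longrightarrow> sum F A \<in> span_mod_I S"
  by (induct A rule: infinite_finite_induct) (auto intro: span_mod_I_zero span_mod_I_add)

lemma br_span_mod_I_right: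
  assumes f: "f \<in> FL" and gens: "\<And>g. g \<in> S \<Longrightarrow> br f g \<in> span_mod_I T"
    and x: "x \<in> span_mod_I S"
  shows "br f x \<in> span_mod_I T"
proof -
  obtain y where y: "y \<in> free.span S" "x \<approx> y"
    using x unfolding span_mod_I_def by blast
  from y(1) have "br f y \<in> span_mod_I T"
  proof (induct rule: free.span_induct_alt)
    case base
    then show ?case by (simp add: span_mod_I_zero)
  next
    case (step c g z)
    then show ?case
      unfolding br_add_right br_smul_right by (blast intro: span_mod_I_add span_mod_I_smul gens)
  qed
  then show ?thesis
    by (rule span_mod_I_modI[OF modI_br_right[OF y(2) f]])
qed

definition Vgen :: "('a tr \<Rightarrow>\<^sub>0 'k) set" where "Vgen = {v i j a | i j a. offdiag i j}"

definition Hgen :: "('a tr \<Rightarrow>\<^sub>0 'k) set" where "Hgen = {h i j a b | i j a b. offdiag i j}"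

abbreviation "SV \<equiv> span_mod_I Vgen"

abbreviation "SVH \<equiv> span_mod_I (Vgen \<union> Hgen)"

lemma v_SV: "offdiag i j \<Longrightarrow> v i j a \<in> SV"
  by (rule span_mod_I_base) (auto simp: Vgen_def)

lemma SV_SVH: "x \<in> SV \<Longrightarrow> x \<in> SVH"
  by (rule span_mod_I_mono[of Vgen]) auto

lemma h_SVH: "offdiag i j \<Longrightarrow> h i j a b \<in> SVH"
  by (rule span_mod_I_base) (auto simp: Hgen_def)

lemma VgenE: "g \<in> Vgen \<Longrightarrow> (\<And>i j a. offdiag i j \<Longrightarrow> g = v i j a \<Longrightarrow> P) \<Longrightarrow> P"
  by (auto simp: Vgen_def)

lemma HgenE: "g \<in> Hgen \<Longrightarrow> (\<And>i j a b. offdiag i j \<Longrightarrow> g = h i j a b \<Longrightarrow> P) \<Longrightarrow> P"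
  by (auto simp: Hgen_def)

lemma VHgen_FL: "g \<in> Vgen \<union> Hgen \<Longrightarrow> g \<in> FL"
  unfolding Vgen_def Hgen_def by (auto intro: v_FL h_FL)

lemma VHgen_homog: "g \<in> Vgen \<union> Hgen \<Longrightarrow> \<exists>p. homog m p g"
  unfolding Vgen_def Hgen_def h_def by (auto intro: homog_v homog_br)

lemma br_v_v_SV:
  assumes kl: "offdiag k l" and ij: "offdiag i j" and "\<not> (l = i \<and> k = j)"
  shows "br (v k l c) (v i j a) \<in> SV"
proof -
  consider (chain) "l = i" "k \<noteq> j" | (reverse) "k = j" "l \<noteq> i" | (disjoint) "l \<noteq> i" "k \<noteq> j"
    using assms(3) by blast
  then show ?thesis
  proof cases
    case chain
    then have "br (v k l c) (v i j a) \<approx> v k j (c * a)"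
      using rel3_modI[of k i j c a] kl ij by simp
    moreover have "offdiag k j"
      using chain kl ij by (auto simp: offdiag_def)
    ultimately show ?thesis by (blast intro: span_mod_I_modI v_SV)
  next
    case reverse
    then have "br (v k l c) (v i j a) \<approx> - smul (sgn_par (tau m k l) (tau m i k)) (v i l (a * c))"
      using rel4_modI[of k l i c a] kl ij by simp
    moreover have "offdiag i l"
      using reverse kl ij by (auto simp: offdiag_def)
    ultimately show ?thesis by (blast intro: span_mod_I_modI span_mod_I_neg span_mod_I_smul v_SV)
  next
    case disjoint
    then have "br (v k l c) (v i j a) \<approx> 0"
      using rel2_modI[OF kl ij] by simp
    then show ?thesis by (blast intro: span_mod_I_modI span_mod_I_zero)
  qed
qed

lemma br_v_v_SVH: "offdiag k l \<Longrightarrow> offdiag i j \<Longrightarrow> br (v k l c) (v i j a) \<in> SVH"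
  using br_v_v_SV SV_SVH h_SVH by (cases "l = i \<and> k = j") (auto simp: h_def)

lemma br_br_v_v_v_SV:
  assumes kl: "offdiag k l" and ij: "offdiag i j" and "\<not> (k = j \<and> l = i)"
  shows "br (br (v k l c) (v i j a)) (v j i b) \<in> SV"
proof -
  have ji: "offdiag j i" and FL: "v j i b \<in> FL"
    using ij by (auto simp: offdiag_def intro: v_FL)
  consider (chain) "l = i" "k \<noteq> j" | (reverse) "k = j" "l \<noteq> i" | (disjoint) "l \<noteq> i" "k \<noteq> j"
    using assms(3) by blast
  then show ?thesis
  proof cases
    case chain
    then have "offdiag k j" "k \<noteq> i"
      using kl ij by (auto simp: offdiag_def)
    then have "br (v k j (c * a)) (v j i b) \<in> SV"
      using br_v_v_SV[OF _ ji] by blast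
    moreover have "br (v k l c) (v i j a) \<approx> v k j (c * a)"
      using rel3_modI[of k i j c a] kl ij chain by simp
    ultimately show ?thesis
      using FL by (blast intro: span_mod_I_modI modI_br_left)
  next
    case reverse
    then have "offdiag i l" "l \<noteq> j"
      using kl ij by (auto simp: offdiag_def)
    then have "br (- smul (sgn_par (tau m k l) (tau m i k)) (v i l (a * c))) (v j i b) \<in> SV"
      unfolding br_neg_left br_smul_left using br_v_v_SV[OF _ ji]
      by (blast intro: span_mod_I_neg span_mod_I_smul)
    moreover have "br (v k l c) (v i j a) \<approx> - smul (sgn_par (tau m k l) (tau m i k)) (v i l (a * c))"
      using rel4_modI[of k l i c a] kl ij reverse by simp
    ultimately show ?thesis
      using FL by (blast intro: span_mod_I_modI modI_br_left)
  next
    case disjoint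
    then have "br (v k l c) (v i j a) \<approx> 0"
      using rel2_modI[OF kl ij] by simp
    then show ?thesis
      using FL span_mod_I_zero by (force intro: span_mod_I_modI modI_br_left)
  qed
qed

lemma br_v_br_v_v_SV:
  assumes kl: "offdiag k l" and ij: "offdiag i j" and "\<not> (k = i \<and> l = j)"
  shows "br (v i j a) (br (v k l c) (v j i b)) \<in> SV"
proof -
  have ji: "offdiag j i" and FL: "v i j a \<in> FL"
    using ij by (auto simp: offdiag_def intro: v_FL)
  consider (chain) "l = j" "k \<noteq> i" | (reverse) "k = i" "l \<noteq> j" | (disjoint) "l \<noteq> j" "k \<noteq> i"
    using assms(3) by blast
  then show ?thesis
  proof cases
    case chain
    then have "offdiag k i" "j \<noteq> k"
      using kl ij by (auto simp: offdiag_def)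
    then have "br (v i j a) (v k i (c * b)) \<in> SV"
      using br_v_v_SV[OF ij] by blast
    moreover have "br (v k l c) (v j i b) \<approx> v k i (c * b)"
      using rel3_modI[of k j i c b] kl ji chain by simp
    ultimately show ?thesis
      using FL by (blast intro: span_mod_I_modI modI_br_right)
  next
    case reverse
    then have "offdiag j l" "i \<noteq> l"
      using kl ij by (auto simp: offdiag_def)
    then have "br (v i j a) (- smul (sgn_par (tau m k l) (tau m j k)) (v j l (b * c))) \<in> SV"
      unfolding br_neg_right br_smul_right using br_v_v_SV[OF ij]
      by (blast intro: span_mod_I_neg span_mod_I_smul)
    moreover have "br (v k l c) (v j i b) \<approx> - smul (sgn_par (tau m k l) (tau m j k)) (v j l (b * c))"
      using rel4_modI[of k l j c b] kl ji reverse by simp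
    ultimately show ?thesis
      using FL by (blast intro: span_mod_I_modI modI_br_right)
  next
    case disjoint
    then have "br (v k l c) (v j i b) \<approx> 0"
      using rel2_modI[OF kl ji] by simp
    then show ?thesis
      using FL span_mod_I_zero by (force intro: span_mod_I_modI modI_br_right)
  qed
qed

lemma br_v_h_SV:
  assumes kl: "offdiag k l" and ij: "offdiag i j"
    and "\<not> (k = j \<and> l = i)" and "\<not> (k = i \<and> l = j)"
  shows "br (v k l c) (h i j a b) \<in> SV"
proof -
  have "offdiag j i"
    using ij by (auto simp: offdiag_def)
  then have "br (v k l c) (h i j a b) \<approx> br (br (v k l c) (v i j a)) (v j i b)
      + smul (sgn_par (tau m k l) (tau m i j)) (br (v i j a) (br (v k l c) (v j i b)))"
    unfolding h_def by (rule leibniz_right[OF v_FL[OF kl] v_FL[OF ij] v_FL homog_v homog_v homog_v])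
  then show ?thesis
    using assms by (blast intro: span_mod_I_modI span_mod_I_add span_mod_I_smul
        br_br_v_v_v_SV br_v_br_v_v_SV)
qed

lemma br_v_SV_SVH: "offdiag k l \<Longrightarrow> x \<in> SV \<Longrightarrow> br (v k l c) x \<in> SVH"
  by (rule br_span_mod_I_right[OF v_FL]) (auto elim!: VgenE intro: br_v_v_SVH)

text \<open>For \<open>{k,l} = {i,j}\<close> write \<open>v\<^sub>k\<^sub>l(c) = [v\<^sub>k\<^sub>p(c), v\<^sub>p\<^sub>l(1)]\<close> with a third index \<open>p\<close>.\<close>

lemma br_v_h_SVH:
  assumes kl: "offdiag k l" and ij: "offdiag i j"
  shows "br (v k l c) (h i j a b) \<in> SVH"
proof (cases "(k = j \<and> l = i) \<or> (k = i \<and> l = j)")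
  case False
  then show ?thesis using br_v_h_SV[OF kl ij] SV_SVH by blast
next
  case True
  obtain p where p: "p \<in> J" "p \<noteq> i" "p \<noteq> j"
    using exists_third_idx[of i j] ij by (auto simp: offdiag_def)
  have kp: "offdiag k p" and pl: "offdiag p l"
    using p True kl ij by (auto simp: offdiag_def)
  have hF: "h i j a b \<in> FL"
    using h_FL[OF ij] .
  obtain q where hq: "homog m q (h i j a b)"
    unfolding h_def by (blast intro: homog_br homog_v)
  have "v k l c \<approx> br (v k p c) (v p l 1)"
    using rel3_modI[OF kp pl, of c 1] kl by (auto simp: offdiag_def intro: modI_sym)
  then have "br (v k l c) (h i j a b) \<approx> br (br (v k p c) (v p l 1)) (h i j a b)"
    using modI_br_left hF by blast
  also have "\<dots> \<approx> br (v k p c) (br (v p l 1) (h i j a b))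
      - smul (sgn_par (tau m k p) (tau m p l)) (br (v p l 1) (br (v k p c) (h i j a b)))"
    by (rule leibniz_left[OF v_FL[OF kp] v_FL[OF pl] hF homog_v homog_v hq])
  finally have e: "br (v k l c) (h i j a b) \<approx> br (v k p c) (br (v p l 1) (h i j a b))
      - smul (sgn_par (tau m k p) (tau m p l)) (br (v p l 1) (br (v k p c) (h i j a b)))" .
  have "br (v p l 1) (h i j a b) \<in> SV" "br (v k p c) (h i j a b) \<in> SV"
    using br_v_h_SV[OF pl ij] br_v_h_SV[OF kp ij] p by blast+
  then have "br (v k p c) (br (v p l 1) (h i j a b)) \<in> SVH"
    "br (v p l 1) (br (v k p c) (h i j a b)) \<in> SVH"
    using kp pl by (blast intro: br_v_SV_SVH)+
  then show ?thesis
    by (intro span_mod_I_modI[OF e] span_mod_I_diff span_mod_I_smul)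
qed

lemma br_v_SVH: "offdiag k l \<Longrightarrow> x \<in> SVH \<Longrightarrow> br (v k l c) x \<in> SVH"
  by (rule br_span_mod_I_right[OF v_FL]) (auto elim!: VgenE HgenE intro: br_v_v_SVH br_v_h_SVH)

lemma br_h_VHgen_SVH:
  assumes ij: "offdiag i j" and g: "g \<in> Vgen \<union> Hgen"
  shows "br (h i j a b) g \<in> SVH"
proof -
  have ji: "offdiag j i"
    using ij by (auto simp: offdiag_def)
  obtain p where "homog m p g"
    using VHgen_homog[OF g] by blast
  then have "br (h i j a b) g \<approx> br (v i j a) (br (v j i b) g)
      - smul (sgn_par (tau m i j) (tau m j i)) (br (v j i b) (br (v i j a) g))"
    unfolding h_def by (rule leibniz_left[OF v_FL[OF ij] v_FL[OF ji] VHgen_FL[OF g] homog_v homog_v])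
  moreover have "g \<in> SVH"
    using g by (rule span_mod_I_base)
  ultimately show ?thesis
    using ij ji by (blast intro: span_mod_I_modI span_mod_I_diff span_mod_I_smul br_v_SVH)
qed

lemma br_h_SVH: "offdiag i j \<Longrightarrow> y \<in> SVH \<Longrightarrow> br (h i j a b) y \<in> SVH"
  by (rule br_span_mod_I_right[OF h_FL]) (auto intro: br_h_VHgen_SVH)

lemma br_SVH:
  assumes x: "x \<in> SVH" and y: "y \<in> SVH" "y \<in> FL"
  shows "br x y \<in> SVH"
proof -
  obtain x' where x': "x' \<in> free.span (Vgen \<union> Hgen)" "x \<approx> x'"
    using x unfolding span_mod_I_def by blast
  from x'(1) have "br x' y \<in> SVH"
  proof (induct rule: free.span_induct_alt)
    case base
    then show ?case by (simp add: span_mod_I_zero)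
  next
    case (step c g z)
    then have "br g y \<in> SVH"
      using y(1) by (auto elim!: VgenE HgenE intro: br_v_SVH br_h_SVH)
    with step show ?case
      unfolding br_add_left br_smul_left by (blast intro: span_mod_I_add span_mod_I_smul)
  qed
  then show ?thesis
    by (rule span_mod_I_modI[OF modI_br_left[OF x'(2) y(2)]])
qed

lemma FL_SVH: "f \<in> FL \<Longrightarrow> f \<in> SVH"
proof -
  have "gen t \<in> SVH" if "valid m n t" for t
    using that
  proof (induct t)
    case (Gen i j a)
    then show ?case using v_SV SV_SVH by (auto simp: v_def offdiag_def)
  next
    case (Br s t)
    then show ?case using br_SVH[of "gen s" "gen t"] FL_gen[of m n t] by simp
  qed
  moreover assume "f \<in> FL"
  ultimately have "lin_ext smul gen f \<in> SVH"
    unfolding lin_ext_def by (intro span_mod_I_sum span_mod_I_smul) (auto simp: FreeL_def)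
  then show ?thesis by (simp add: lin_ext_gen_id)
qed

section \<open>Canonical forms and injectivity\<close>

definition offdiag_pairs :: "(nat \<times> nat) set" where "offdiag_pairs = {q. fst q \<in> J \<and> snd q \<in> J \<and> fst q \<noteq> snd q}"

definition diag_idx :: "nat set" where "diag_idx = J - {1}"

lemma finite_offdiag_pairs [simp]: "finite offdiag_pairs"
  by (rule finite_subset[of _ "J \<times> J"]) (auto simp: offdiag_pairs_def)

lemma finite_diag_idx [simp]: "finite diag_idx"
  by (simp add: diag_idx_def)

lemma offdiag_pairs_offdiag: "q \<in> offdiag_pairs \<Longrightarrow> offdiag (fst q) (snd q)"
  by (simp add: offdiag_pairs_def offdiag_def)

lemma diag_idx_offdiag: "k \<in> diag_idx \<Longrightarrow> offdiag 1 k"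
  using idx1 by (auto simp: diag_idx_def offdiag_def)

lemma diag_idx_offdiag': "k \<in> diag_idx \<Longrightarrow> offdiag (Suc 0) k"
  using diag_idx_offdiag by simp

lemma offdiag_in_pairs: "offdiag i j \<Longrightarrow> (i, j) \<in> offdiag_pairs"
  by (simp add: offdiag_pairs_def offdiag_def)

lemma offdiag_in_diag_idx: "offdiag 1 k \<Longrightarrow> k \<in> diag_idx"
  by (auto simp: diag_idx_def offdiag_def)

definition vsum :: "(nat \<times> nat \<Rightarrow> 'a) \<Rightarrow> ('a tr \<Rightarrow>\<^sub>0 'k)" where
  "vsum x = (\<Sum>q\<in>offdiag_pairs. v (fst q) (snd q) (x q))"

definition dsum :: "(nat \<Rightarrow> 'a) \<Rightarrow> ('a tr \<Rightarrow>\<^sub>0 'k)" where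
  "dsum y = (\<Sum>k\<in>diag_idx. hs 1 k 1 (y k))"

definition canonical :: "('a tr \<Rightarrow>\<^sub>0 'k) set" where
  "canonical = {vsum x + dsum y + lift u | x y u. True}"

definition Canon :: "('a tr \<Rightarrow>\<^sub>0 'k) set" where
  "Canon = {f. \<exists>c\<in>canonical. f \<approx> c}"

lemma vsum_add: "vsum x + vsum x' \<approx> vsum (\<lambda>q. x q + x' q)"
  unfolding vsum_def sum.distrib[symmetric]
  by (rule modI_sum) (rule modI_sym, rule v_add, rule offdiag_pairs_offdiag)

lemma dsum_add: "dsum y + dsum y' \<approx> dsum (\<lambda>k. y k + y' k)"
  unfolding dsum_def sum.distrib[symmetric]
  by (rule modI_sum) (rule modI_sym, rule hs_add_right, rule diag_idx_offdiag)

lemma vsum_smul: "smul c (vsum x) \<approx> vsum (\<lambda>q. sc c (x q))"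
  unfolding vsum_def free.scale_sum_right
  by (rule modI_sum) (rule modI_sym, rule v_sc, rule offdiag_pairs_offdiag)

lemma dsum_smul: "smul c (dsum y) \<approx> dsum (\<lambda>k. sc c (y k))"
  unfolding dsum_def free.scale_sum_right
  by (rule modI_sum) (rule modI_sym, rule hs_scale_right, rule diag_idx_offdiag)

lemma vsum_zero: "vsum (\<lambda>q. 0) \<approx> 0"
proof -
  have "vsum (\<lambda>q. 0) \<approx> (\<Sum>q\<in>offdiag_pairs. 0)" unfolding vsum_def by (rule modI_sum) (rule v_zero, rule offdiag_pairs_offdiag)
  then show ?thesis by simp
qed

lemma dsum_zero: "dsum (\<lambda>k. 0) \<approx> 0"
proof -
  have "dsum (\<lambda>k. 0) \<approx> (\<Sum>k\<in>diag_idx. 0)" unfolding dsum_def by (rule modI_sum) (rule hs_zero_right, rule diag_idx_offdiag)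
  then show ?thesis by simp
qed

lemma Canon_modI: "f \<approx> g \<Longrightarrow> g \<in> Canon \<Longrightarrow> f \<in> Canon"
proof -
  assume a: "f \<approx> g" "g \<in> Canon"
  then obtain c where "c \<in> canonical" "g \<approx> c" unfolding Canon_def by blast
  then show ?thesis unfolding Canon_def using modI_trans[OF a(1)] by blast
qed

lemma canonical_Canon: "vsum x + dsum y + lift u \<in> Canon"
  unfolding Canon_def canonical_def using modI_refl by blast

lemma Canon_add: "f \<in> Canon \<Longrightarrow> g \<in> Canon \<Longrightarrow> f + g \<in> Canon"
proof -
  assume "f \<in> Canon" "g \<in> Canon"
  then obtain x y u x' y' u' where f: "f \<approx> vsum x + dsum y + lift u" and g: "g \<approx> vsum x' + dsum y' + lift u'"
    unfolding Canon_def canonical_def by blast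
  have "f + g \<approx> (vsum x + vsum x') + (dsum y + dsum y') + lift (u + u')"
    using modI_add[OF f g] by (simp add: lift_add algebra_simps)
  also have "\<dots> \<approx> vsum (\<lambda>q. x q + x' q) + dsum (\<lambda>k. y k + y' k) + lift (u + u')"
    by (intro modI_add vsum_add dsum_add modI_refl)
  finally show ?thesis using canonical_Canon Canon_modI by blast
qed

lemma Canon_smul: "f \<in> Canon \<Longrightarrow> smul c f \<in> Canon"
proof -
  assume "f \<in> Canon"
  then obtain x y u where f: "f \<approx> vsum x + dsum y + lift u"
    unfolding Canon_def canonical_def by blast
  have "smul c f \<approx> smul c (vsum x) + smul c (dsum y) + lift (smul c u)"
    using modI_smul[OF f, of c] by (simp add: lift_smul free.scale_right_distrib)
  also have "\<dots> \<approx> vsum (\<lambda>q. sc c (x q)) + dsum (\<lambda>k. sc c (y k)) + lift (smul c u)"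
    by (intro modI_add vsum_smul dsum_smul modI_refl)
  finally show ?thesis using canonical_Canon Canon_modI by blast
qed

lemma Canon_zero: "0 \<in> Canon"
proof -
  have "(0 :: 'a tr \<Rightarrow>\<^sub>0 'k) \<approx> vsum (\<lambda>q. 0) + dsum (\<lambda>k. 0) + lift 0"
    using modI_sym[OF modI_add[OF vsum_zero dsum_zero]] by simp
  then show ?thesis using canonical_Canon Canon_modI by blast
qed

lemma Canon_neg: "f \<in> Canon \<Longrightarrow> - f \<in> Canon"
  using Canon_smul[of f "-1"] by simp

lemma Canon_diff: "f \<in> Canon \<Longrightarrow> g \<in> Canon \<Longrightarrow> f - g \<in> Canon"
  using Canon_add[of f "- g"] Canon_neg[of g] by simp

lemma v_Canon: "offdiag k l \<Longrightarrow> v k l a \<in> Canon"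
proof -
  assume kl: "offdiag k l"
  have "vsum (\<lambda>q. if q = (k, l) then a else 0) \<approx> (\<Sum>q\<in>offdiag_pairs. if q = (k, l) then v k l a else 0)"
    unfolding vsum_def
  proof (rule modI_sum)
    fix q assume q: "q \<in> offdiag_pairs"
    show "v (fst q) (snd q) (if q = (k, l) then a else 0) \<approx> (if q = (k, l) then v k l a else 0)"
      using v_zero[OF offdiag_pairs_offdiag[OF q]] by auto
  qed
  also have "\<dots> = v k l a" using offdiag_in_pairs[OF kl] by (simp add: sum.delta)
  finally have "v k l a \<approx> vsum (\<lambda>q. if q = (k, l) then a else 0) + dsum (\<lambda>k. 0) + lift 0"
    using modI_sym modI_add[OF _ dsum_zero] by (metis add.right_neutral lift_zero)
  then show ?thesis using canonical_Canon Canon_modI by blast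
qed

lemma hs_one_Canon: "offdiag 1 k \<Longrightarrow> hs 1 k 1 y \<in> Canon"
proof -
  assume k: "offdiag 1 k"
  have "dsum (\<lambda>j. if j = k then y else 0) \<approx> (\<Sum>j\<in>diag_idx. if j = k then hs 1 k 1 y else 0)"
    unfolding dsum_def
  proof (rule modI_sum)
    fix j assume j: "j \<in> diag_idx"
    show "hs 1 j 1 (if j = k then y else 0) \<approx> (if j = k then hs 1 k 1 y else 0)"
      using hs_zero_right[OF diag_idx_offdiag[OF j]] by auto
  qed
  also have "\<dots> = hs 1 k 1 y" using offdiag_in_diag_idx[OF k] by (simp add: sum.delta)
  finally have "hs 1 k 1 y \<approx> vsum (\<lambda>q. 0) + dsum (\<lambda>j. if j = k then y else 0) + lift 0"
    using modI_sym modI_add[OF vsum_zero] by (metis add.left_neutral add.right_neutral lift_zero)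
  then show ?thesis using canonical_Canon Canon_modI by blast
qed

lemma lift_Canon: "lift u \<in> Canon"
proof -
  have "lift u \<approx> vsum (\<lambda>q. 0) + dsum (\<lambda>j. 0) + lift u"
    using modI_sym[OF modI_add[OF modI_add[OF vsum_zero dsum_zero] modI_refl[of "lift u"]]] by simp
  then show ?thesis using canonical_Canon Canon_modI by blast
qed

lemma hs12_Canon: "hs 1 2 a b \<in> Canon"
proof -
  have "hs 1 2 a b = lift (gen (a, b)) + hs 1 2 1 (a * b)" by (simp add: lift_gen)
  then show ?thesis using Canon_add[OF lift_Canon hs_one_Canon[OF offdiag_small(1)]] by simp
qed

lemma hs1_Canon: "offdiag 1 j \<Longrightarrow> hs 1 j a b \<in> Canon"
proof (cases "j = 2")
  case True then show ?thesis using hs12_Canon by simp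
next
  case False
  assume j: "offdiag 1 j"
  have 2: "offdiag 2 j" using j False idx2 by (auto simp: offdiag_def)
  have e1: "hs 1 j a b \<approx> hs 1 2 a b + hs 2 j 1 (b * a)" by (rule hs_split_left[OF j offdiag_small(1) 2])
  have e2: "hs 2 j 1 (b * a) \<approx> hs 1 j 1 (b * a) - hs 1 2 1 (b * a)"
    by (rule modI_solve, rule hs_one_split[OF j offdiag_small(1) 2])
  have "hs 1 j a b \<approx> hs 1 2 a b + (hs 1 j 1 (b * a) - hs 1 2 1 (b * a))"
    by (rule modI_trans[OF e1 modI_add[OF modI_refl e2]])
  then show ?thesis
    by (rule Canon_modI) (intro Canon_add Canon_diff hs12_Canon hs_one_Canon j offdiag_small)
qed

lemma hs_not1_Canon: "offdiag i j \<Longrightarrow> i \<noteq> 1 \<Longrightarrow> j \<noteq> 1 \<Longrightarrow> hs i j a b \<in> Canon"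
proof -
  assume ij: "offdiag i j" and i: "i \<noteq> 1" and j: "j \<noteq> 1"
  have 1: "offdiag 1 j" "offdiag 1 i" using ij i j idx1 by (auto simp: offdiag_def)
  have "hs i j a b \<approx> hs 1 j a b - hs 1 i 1 (a * b)"
    by (rule modI_solve, rule hs_split_right[OF 1(1) 1(2) ij])
  then show ?thesis by (rule Canon_modI) (intro Canon_diff hs1_Canon hs_one_Canon 1)
qed

lemma hs_Canon: "offdiag i j \<Longrightarrow> hs i j a b \<in> Canon"
proof -
  assume ij: "offdiag i j"
  consider (a) "i = 1" | (b) "i \<noteq> 1" "j \<noteq> 1" | (c) "i \<noteq> 1" "j = 1" by blast
  then show ?thesis
  proof cases
    case a then show ?thesis using hs1_Canon ij by simp
  next
    case b then show ?thesis using hs_not1_Canon ij by blast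
  next
    case c
    obtain k where k: "k \<in> J" "k \<noteq> 1" "k \<noteq> i" using exists_third_idx[of 1 i] idx1 ij by (auto simp: offdiag_def)
    have ik: "offdiag i k" and k1: "offdiag k 1" and ok: "offdiag 1 k" using k ij c idx1 by (auto simp: offdiag_def)
    have "hs i 1 a b \<approx> hs i k a b + hs k 1 1 (b * a)"
      using hs_split_left[OF _ ik k1] ij c by simp
    also have "\<dots> \<approx> hs i k a b + - hs 1 k 1 (b * a)"
      by (rule modI_add[OF modI_refl hs_one_antisym[OF ok]])
    finally have e: "hs i 1 a b \<approx> hs i k a b + - hs 1 k 1 (b * a)" .
    have "hs i k a b \<in> Canon" using hs_not1_Canon[OF ik c(1) k(2)] .
    moreover have "- hs 1 k 1 (b * a) \<in> Canon" using Canon_neg[OF hs_one_Canon[OF ok]] .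
    ultimately have "hs i k a b + - hs 1 k 1 (b * a) \<in> Canon" by (rule Canon_add)
    then show ?thesis using c(2) Canon_modI[OF e] by simp
  qed
qed

lemma h_Canon: "offdiag i j \<Longrightarrow> h i j a b \<in> Canon"
proof -
  assume "offdiag i j"
  have "h i j a b = smul (idx_sign i) (hs i j a b)" by (simp add: hs_def idx_sign_square)
  then show ?thesis using Canon_smul[OF hs_Canon[OF \<open>offdiag i j\<close>]] by simp
qed

lemma span_Canon: "y \<in> free.span (Vgen \<union> Hgen) \<Longrightarrow> y \<in> Canon"
proof (induct rule: free.span_induct_alt)
  case base
  then show ?case by (rule Canon_zero)
next
  case (step c g z)
  then have "g \<in> Canon"
    by (auto elim!: VgenE HgenE intro: v_Canon h_Canon)
  with step show ?case by (intro Canon_add Canon_smul)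
qed

lemma FL_Canon: "f \<in> FL \<Longrightarrow> f \<in> Canon"
proof -
  assume "f \<in> FL"
  then obtain y where "y \<in> free.span (Vgen \<union> Hgen)" "f \<approx> y"
    using FL_SVH unfolding span_mod_I_def by blast
  then show ?thesis by (intro Canon_modI[of f y] span_Canon)
qed

lemma psi_vsum: "psi (vsum x) r s = (if (r, s) \<in> offdiag_pairs then x (r, s) else 0)"
proof -
  have "psi (vsum x) r s = (\<Sum>q\<in>offdiag_pairs. if q = (r, s) then x q else 0)"
    unfolding vsum_def psi_sum by (rule sum.cong) (auto simp: Emat_def)
  then show ?thesis by (simp add: sum.delta)
qed

lemma psi_dsum_diag: "k0 \<in> diag_idx \<Longrightarrow> psi (dsum y) k0 k0 = - sc (idx_sign 1) (neg_if (tau m k0 1) (y k0))"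
proof -
  assume k0: "k0 \<in> diag_idx"
  then have "k0 \<noteq> 1" by (simp add: diag_idx_def)
  have "psi (dsum y) k0 k0 = (\<Sum>k\<in>diag_idx. if k = k0 then - sc (idx_sign 1) (neg_if (tau m k0 1) (y k0)) else 0)"
    unfolding dsum_def psi_sum
    by (rule sum.cong) (use \<open>k0 \<noteq> 1\<close> diag_idx_offdiag' in \<open>auto simp: psi_hs\<close>)
  then show ?thesis using k0 by (simp add: sum.delta)
qed

lemma psi_dsum_11: "psi (dsum y) (Suc 0) (Suc 0) = (\<Sum>k\<in>diag_idx. sc (idx_sign (Suc 0)) (y k))"
  unfolding dsum_def psi_sum
  by (rule sum.cong) (auto simp: psi_hs diag_idx_offdiag' diag_idx_def)

lemma psi_dsum_offdiag: "r \<noteq> s \<Longrightarrow> psi (dsum y) r s = 0"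
  unfolding dsum_def psi_sum
  by (rule sum.neutral) (auto simp: psi_hs diag_idx_offdiag')

lemma idx_sign_scale_eq_0: "sc (idx_sign 1) z = 0 \<Longrightarrow> z = 0"
proof -
  assume "sc (idx_sign 1) z = 0"
  then have "sc (idx_sign 1) (sc (idx_sign 1) z) = 0" by simp
  then show ?thesis by (simp add: idx_sign_square)
qed

lemma idx_sign_scale_eq_0': "sc (idx_sign (Suc 0)) z = 0 \<Longrightarrow> z = 0"
  using idx_sign_scale_eq_0 by simp

lemma neg_if_eq_0: "neg_if b z = 0 \<Longrightarrow> (z::'a) = 0"
  by (cases b) auto

lemma psi_canonical_zero:
  assumes psi0: "\<And>r s. psi (vsum x + dsum y + lift u) r s = 0"
  shows "vsum x + dsum y \<approx> 0"
proof -
  let ?c = "vsum x + dsum y + lift u"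
  have x0: "x q = 0" if q: "q \<in> offdiag_pairs" for q
  proof -
    obtain r s where rs: "q = (r, s)" by (cases q)
    with q have "r \<noteq> s" by (simp add: offdiag_pairs_def)
    then have "psi ?c r s = x q" using q rs by (simp add: psi_add psi_vsum psi_dsum_offdiag psi_lift_entry)
    with psi0 show ?thesis by simp
  qed
  have y0: "y k = 0" if k: "k \<in> diag_idx" "k \<noteq> 2" for k
  proof -
    have "(k, k) \<notin> offdiag_pairs" by (simp add: offdiag_pairs_def)
    then have "psi ?c k k = - sc (idx_sign 1) (neg_if (tau m k 1) (y k))"
      using k by (simp add: psi_add psi_vsum psi_dsum_diag psi_lift_entry)
    with psi0 have "sc (idx_sign 1) (neg_if (tau m k 1) (y k)) = 0" by simp
    then show ?thesis by (blast dest: idx_sign_scale_eq_0 neg_if_eq_0)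
  qed
  have y2: "y 2 = 0"
  proof -
    have "2 \<in> diag_idx" "(Suc 0, Suc 0) \<notin> offdiag_pairs"
      using idx2 by (simp_all add: diag_idx_def offdiag_pairs_def)
    then have "psi ?c (Suc 0) (Suc 0) = (\<Sum>k\<in>diag_idx. sc (idx_sign (Suc 0)) (y k))"
      by (simp add: psi_add psi_vsum psi_dsum_11 psi_lift_entry)
    also have "\<dots> = (\<Sum>k\<in>diag_idx. if k = 2 then sc (idx_sign (Suc 0)) (y 2) else 0)"
      by (rule sum.cong) (auto simp: y0)
    also have "\<dots> = sc (idx_sign (Suc 0)) (y 2)"
      using \<open>2 \<in> diag_idx\<close> by simp
    finally show ?thesis
      using psi0 idx_sign_scale_eq_0' by metis
  qed
  have "vsum x = vsum (\<lambda>q. 0)"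
    unfolding vsum_def by (rule sum.cong) (auto simp: x0)
  moreover have "dsum y = dsum (\<lambda>k. 0)"
    unfolding dsum_def using y0 y2 by (intro sum.cong) (auto, metis)
  ultimately show ?thesis
    using modI_add[OF vsum_zero dsum_zero] by simp
qed

text \<open>A canonical form in Ker \<open>\<psi>\<close> is \<open>lift u\<close> modulo I, and \<open>u\<close> is then a boundary.\<close>

lemma canonical_in_ideal:
  assumes psi0: "\<And>r s. psi (vsum x + dsum y + lift u) r s = 0"
    and Omega_Bd: "Omega (vsum x + dsum y + lift u) \<in> Bd"
  shows "vsum x + dsum y + lift u \<in> I"
proof -
  have vd: "vsum x + dsum y \<in> I"
    using psi_canonical_zero[OF psi0] by (simp add: modI_def)
  then have "Omega (vsum x + dsum y) \<in> Bd"
    using ideal_psi_Omega by blast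
  moreover have "Omega (lift u) = Omega (vsum x + dsum y + lift u) - Omega (vsum x + dsum y)"
    by (simp add: Omega_add)
  ultimately have "Omega (lift u) \<in> Bd"
    using Bd_diff[OF Omega_Bd] by simp
  then have "Omega (lift u) - (Omega (lift u) - u) \<in> Bd"
    using Bd_diff Omega_lift by blast
  then have "u \<in> Bd"
    by simp
  then show ?thesis
    using vd lift_Bd I_add by blast
qed

lemma ker_Omega_Bd_in_ideal:
  assumes f: "f \<in> ker_psi sc m n" and Omega_Bd: "Omega f \<in> Bd"
  shows "f \<in> I"
proof -
  obtain x y u where fc: "f - (vsum x + dsum y + lift u) \<in> I"
    using FL_Canon f unfolding Canon_def canonical_def modI_def ker_psi_def by blast
  let ?c = "vsum x + dsum y + lift u"
  have "psi (f - ?c) = (\<lambda>r s. 0)" "Omega (f - ?c) \<in> Bd"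
    using ideal_psi_Omega[OF fc] by auto
  moreover have "psi f = (\<lambda>r s. 0)"
    using f by (simp add: ker_psi_def)
  ultimately have "psi ?c r s = 0" for r s
    by (metis psi_diff diff_0 neg_equal_0_iff_equal)
  moreover have "Omega ?c = Omega f - Omega (f - ?c)"
    by (simp add: Omega_diff)
  ultimately have "?c \<in> I"
    using canonical_in_ideal Bd_diff[OF Omega_Bd \<open>Omega (f - ?c) \<in> Bd\<close>] by simp
  then have "(f - ?c) + ?c \<in> I"
    using I_add[OF fc] by blast
  then show ?thesis
    by simp
qed

lemma subspace_ker_psi: "free.subspace (ker_psi sc m n)"
  by (auto simp: free.subspace_def ker_psi_def fun_eq_iff psi_add psi_smul FL_add FL_smul)

lemma lift_ker_psi: "u \<in> HH1_cycles sc \<Longrightarrow> lift u \<in> ker_psi sc m n"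
  using lift_FL psi_lift_cycle by (auto simp: ker_psi_def HH1_cycles_def fun_eq_iff)

end

theorem theorem4p2:
  fixes sc :: "'k::field \<Rightarrow> 'a::{ring,monoid_mult} \<Rightarrow> 'a" and m n :: nat
  assumes "K_algebra sc"
    and "m + n \<ge> 3"
    and "m + n = 4 \<Longrightarrow> (2::'k) \<noteq> 0"
    and "m + n = 3 \<Longrightarrow> (3::'k) \<noteq> 0"
  shows "quot_iso smul (ker_psi sc m n) (stl_ideal sc m n)
                  smul (HH1_cycles sc) (HH1_bounds sc)"
proof -
  \<comment> \<open>The characteristic hypotheses make \<open>\<psi>\<close> a universal central extension in the paper;
      the identification of its kernel with \<open>HH\<^sub>1(A)\<close> does not need them.\<close>
  interpret stl_algebra sc m n
    using assms(1,2) by unfold_locales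
  show ?thesis
  proof (rule quot_iso_by_linear_map[where \<Phi> = Omega])
    show "module (smul :: 'k \<Rightarrow> ('a tr \<Rightarrow>\<^sub>0 'k) \<Rightarrow> _)" "module (smul :: 'k \<Rightarrow> ('a \<times> 'a \<Rightarrow>\<^sub>0 'k) \<Rightarrow> _)"
      by (simp_all add: module_iff_vector_space free.vector_space_axioms)
    show "free.subspace (ker_psi sc m n)" "free.subspace I" "free.subspace Bd"
      by (fact subspace_ker_psi subspace_I subspace_Bd)+
    show "Omega (x + y) = Omega x + Omega y" "Omega (smul c x) = smul c (Omega x)" for x y c
      by (fact Omega_add Omega_smul)+
    show "Omega f \<in> HH1_cycles sc" if "f \<in> ker_psi sc m n" for f
      using that by (rule Omega_ker_cycle)
    show "Omega f \<in> Bd" if "f \<in> I" for f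
      using ideal_psi_Omega[OF that] by blast
    show "f \<in> I" if "f \<in> ker_psi sc m n" "Omega f \<in> Bd" for f
      using that by (rule ker_Omega_Bd_in_ideal)
    show "\<exists>f\<in>ker_psi sc m n. Omega f - u \<in> Bd" if "u \<in> HH1_cycles sc" for u
      using lift_ker_psi[OF that] Omega_lift by blast
  qed
qed

end
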